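(* Let $v$, $v_1$, $v_2$ be $0$-, $1$-, $2$-equivariant functions respectively (in the relevant spaces below). Near the origin: $\|\mathbf{1}_{(0,1]}v\|_{L^\infty}\lesssim\|v\|_{\dot{\mathcal{H}}^3_0}$, $\|\mathbf{1}_{(0,1]}v_1\|_{L^\infty}\lesssim\|v_1\|_{\dot{\mathcal{H}}^2_1}$, $\|\mathbf{1}_{(0,1]}v_2\|_{L^\infty}\lesssim\|v_2\|_{\dot{\mathcal{H}}^1_2}$. Near infinity: $\|\mathbf{1}_{[1,\infty)}v\|_{L^\infty}\lesssim\|v\|_{\dot{\mathcal{H}}^1_0}$, $\|\mathbf{1}_{[1,\infty)}\langle\log_+r\rangle^{-1}|v|_{-2}\|_{L^\infty}\lesssim\|v\|_{\dot{\mathcal{H}}^3_0}$, $\|\mathbf{1}_{[1,\infty)}v_1\|_{L^\infty}\lesssim\|v_1\|_{L^2}^{1/2}\|v_1\|_{\dot{\mathcal{H}}^2_1}^{1/2}$, $\|\mathbf{1}_{[1,\infty)}\langle\log_+r\rangle^{-1}|v_1|_{-1}\|_{L^\infty}\lesssim\|v_1\|_{\dot{\mathcal{H}}^2_1}$, $\|\mathbf{1}_{[1,\infty)}\langle\log_+r\rangle^{-1}v_2\|_{L^\infty}\lesssim\|v_2\|_{\dot{\mathcal{H}}^1_2}$.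
   Context: Equivariant functions on $\mathbb{R}^2$ are identified with radial profiles on $(0,\infty)$; $L^2$ is $L^2(\mathbb{R}^2)$. $\langle a\rangle=(1+a^2)^{1/2}$, $\log_\pm$ is $\max\{0,\pm\log\}$. For $f$ and $k\ge0$: $|f|_{-k}(r)=\sup_{0\le\ell\le k}|r^{-\ell}\partial_r^{k-\ell}f(r)|$. Adapted spaces are completions of $m$-equivariant Schwartz functions under: $\|v\|_{\dot{\mathcal{H}}^1_0}=\|\partial_rv\|_{L^2}+\|r^{-1}\langle\log_-r\rangle^{-1}v\|_{L^2}$; $\|v\|_{\dot{\mathcal{H}}^1_2}=\|\partial_rv\|_{L^2}+\|r^{-1}\langle\log_+r\rangle^{-1}v\|_{L^2}$; $\|v\|_{\dot{\mathcal{H}}^2_1}=\|\partial_{rr}v\|_{L^2}+\|r^{-1}\langle\log r\rangle^{-1}|v|_{-1}\|_{L^2}$; $\|v\|_{\dot{\mathcal{H}}^3_0}=\|\partial_{rrr}v\|_{L^2}+\|r^{-1}\langle\log r\rangle^{-1}|\partial_rv|_{-1}\|_{L^2}+\|r^{-1}\langle r\rangle^{-2}\langle\log r\rangle^{-1}v\|_{L^2}$. *)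

theory Defs
  imports "HOL-Analysis.Analysis"
begin

text \<open>R^2 is identified with the complex plane; functions on R^2 are complex-valued.\<close>

definition pdir :: "complex \<Rightarrow> (complex \<Rightarrow> complex) \<Rightarrow> complex \<Rightarrow> complex" where
  "pdir e f x = frechet_derivative f (at x) e"

fun iter_pd :: "complex list \<Rightarrow> (complex \<Rightarrow> complex) \<Rightarrow> complex \<Rightarrow> complex" where
  "iter_pd [] f = f"
| "iter_pd (e # es) f = pdir e (iter_pd es f)"

definition schwartz :: "(complex \<Rightarrow> complex) \<Rightarrow> bool" where
  "schwartz u \<longleftrightarrow> (\<forall>ds. set ds \<subseteq> {1, \<i>} \<longrightarrow>
      (\<forall>x. iter_pd ds u differentiable (at x)) \<and>
      (\<forall>n::nat. \<exists>B. \<forall>x. norm x ^ n * norm (iter_pd ds u x) \<le> B))"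

definition equivariant :: "int \<Rightarrow> (complex \<Rightarrow> complex) \<Rightarrow> bool" where
  "equivariant m u \<longleftrightarrow> (\<forall>\<theta> z. u (cis \<theta> * z) = cis (of_int m * \<theta>) * u z)"

definition profile :: "(complex \<Rightarrow> complex) \<Rightarrow> real \<Rightarrow> complex" where
  "profile u r = u (complex_of_real r)"

definition jb :: "real \<Rightarrow> real" where "jb a = sqrt (1 + a\<^sup>2)"
definition logp :: "real \<Rightarrow> real" where "logp r = max 0 (ln r)"
definition logm :: "real \<Rightarrow> real" where "logm r = max 0 (- ln r)"

definition dr :: "(real \<Rightarrow> complex) \<Rightarrow> real \<Rightarrow> complex" where
  "dr f r = vector_derivative f (at r)"

abbreviation drk :: "nat \<Rightarrow> (real \<Rightarrow> complex) \<Rightarrow> real \<Rightarrow> complex" where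
  "drk k f \<equiv> (dr ^^ k) f"

text \<open>|f|_{-k}(r) = sup_{0<=l<=k} |r^{-l} d_r^{k-l} f(r)|\<close>
definition wk :: "nat \<Rightarrow> (real \<Rightarrow> complex) \<Rightarrow> real \<Rightarrow> real" where
  "wk k f r = Max ((\<lambda>l. norm (drk (k - l) f r) / r ^ l) ` {0..k})"

definition ennsqrt :: "ennreal \<Rightarrow> ennreal" where
  "ennsqrt x = (if x = top then top else ennreal (sqrt (enn2real x)))"

text \<open>L^2(R^2) norm of a radial profile (possibly infinite).\<close>
definition L2 :: "(real \<Rightarrow> 'a::real_normed_vector) \<Rightarrow> ennreal" where
  "L2 f = ennsqrt (\<integral>\<^sup>+ r. ennreal (2 * pi * r * (norm (f r))\<^sup>2) * indicator {0<..} r \<partial>lborel)"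

definition H10 :: "(real \<Rightarrow> complex) \<Rightarrow> ennreal" where
  "H10 v = L2 (dr v) + L2 (\<lambda>r. v r / complex_of_real (r * jb (logm r)))"

definition H12 :: "(real \<Rightarrow> complex) \<Rightarrow> ennreal" where
  "H12 v = L2 (dr v) + L2 (\<lambda>r. v r / complex_of_real (r * jb (logp r)))"

definition H21 :: "(real \<Rightarrow> complex) \<Rightarrow> ennreal" where
  "H21 v = L2 (drk 2 v) + L2 (\<lambda>r. wk 1 v r / (r * jb (ln r)))"

definition H30 :: "(real \<Rightarrow> complex) \<Rightarrow> ennreal" where
  "H30 v = L2 (drk 3 v) + L2 (\<lambda>r. wk 1 (dr v) r / (r * jb (ln r)))
         + L2 (\<lambda>r. v r / complex_of_real (r * (jb r)\<^sup>2 * jb (ln r)))"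

text \<open>sup norm of f restricted to a set S (f continuous on (0,inf) in our use)\<close>
definition Linf :: "real set \<Rightarrow> (real \<Rightarrow> real) \<Rightarrow> ennreal" where
  "Linf S f = (SUP r\<in>S. ennreal \<bar>f r\<bar>)"

end

theory Submission
  imports Defs
begin

(*
  Every bound is a one-dimensional estimate for the radial profile v.  A difference
  v(b) - v(a) is bounded by the fundamental theorem of calculus and Cauchy-Schwarz
  against a weight W, chosen so that |v'|^2 / W is dominated by the density
  2 pi x |w / (x <ln x>)|^2 of an adapted norm.  For W = x^(2k+1) <ln x>^2 and
  W = 1/x, the integral of W over [1, r] yields the growth factors r^(k+1) <ln r>
  and (ln r)^(1/2) near infinity; near the origin, |v(r)| is compared with the
  average of |v| over [1, 2].  If v vanishes at 0 or at infinity, |v|^2 is instead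
  obtained by integrating |d/dr |v|^2| <= 2 |v| |v'| <= |v|^2 / r + r |v'|^2.
  For m = 1 the interpolation bound |v(r)|^2 <= ||v||_L2 ||v''||_L2 follows from
  d/ds (|v|^2 / s^2) = 2 Re(conj v q) / s^3 with q = s v' - v, together with
  Hardy's inequality for q, whose derivative is s v''.
*)

lemma ennsqrt_sq: "(ennsqrt x)^2 = x"
  by (cases x) (auto simp: ennsqrt_def ennreal_power)

lemma ennreal_le_of_power_le:
  fixes y z :: ennreal
  assumes "y ^ n \<le> z ^ n" "0 < n"
  shows "y \<le> z"
proof (rule ccontr)
  assume "\<not> y \<le> z"
  hence "z < y" by simp
  have "z ^ n < y ^ n"
  proof (cases z rule: ennreal_cases)
    case (real a)
    show ?thesis
    proof (cases y rule: ennreal_cases)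
      case (real b)
      with \<open>z < y\<close> \<open>z = ennreal a\<close> have "a < b" using ennreal_less_iff[OF \<open>0 \<le> a\<close>] by simp
      hence "a ^ n < b ^ n" using real \<open>0 \<le> a\<close> assms(2) by (intro power_strict_mono) auto
      thus ?thesis using real \<open>z = ennreal a\<close> \<open>0 \<le> a\<close> by (simp add: ennreal_power ennreal_less_iff)
    next
      case top
      thus ?thesis using real assms(2) by (simp add: ennreal_power)
    qed
  next
    case top
    thus ?thesis using \<open>z < y\<close> by simp
  qed
  thus False using assms(1) by simp
qed

lemma ennsqrt_mono: "x \<le> y \<Longrightarrow> ennsqrt x \<le> ennsqrt y"
  by (rule ennreal_le_of_power_le[of _ 2]) (simp_all add: ennsqrt_sq)

lemma ennreal_le_mult_of_sq_le:
  fixes y X :: ennreal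
  assumes "y^2 \<le> ennreal a * X^2" "a \<le> c^2" "0 \<le> c"
  shows "y \<le> ennreal c * X"
proof (rule ennreal_le_of_power_le[of _ 2])
  have "ennreal a * X^2 \<le> ennreal (c^2) * X^2"
    using assms(2) by (intro mult_right_mono ennreal_leI) auto
  also have "\<dots> = (ennreal c * X)^2"
    using assms(3) by (simp add: power_mult_distrib ennreal_power)
  finally show "y^2 \<le> (ennreal c * X)^2" using assms(1) by simp
qed simp

lemma ennreal_le_mult_add_of_sq_le:
  fixes y X Y :: ennreal
  assumes "y^2 \<le> ennreal a * X^2 + ennreal b * Y^2" "a \<le> c^2" "b \<le> c^2" "0 \<le> c"
  shows "y \<le> ennreal c * (X + Y)"
proof (rule ennreal_le_mult_of_sq_le[OF _ order.refl \<open>0 \<le> c\<close>])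
  have "y^2 \<le> ennreal (c^2) * X^2 + ennreal (c^2) * Y^2"
    using assms(1) by (rule order_trans)
      (intro add_mono mult_right_mono ennreal_leI; use assms(2,3) in simp)
  also have "\<dots> \<le> ennreal (c^2) * (X + Y)^2"
    by (simp add: distrib_left[symmetric] mult_left_mono power2_sum add_increasing2)
  finally show "y^2 \<le> ennreal (c^2) * (X + Y)^2" .
qed

lemma ennreal_sq_le_two_sq_add:
  fixes y A B :: ennreal
  assumes "y \<le> A + B"
  shows "y^2 \<le> 2 * A^2 + 2 * B^2"
proof -
  have "y^2 \<le> (A + B)^2" using assms by (rule power_mono) simp
  also have "\<dots> \<le> 2 * A^2 + 2 * B^2"
    using sum_of_squares_ge_ennreal[of A B] by (simp add: power2_sum algebra_simps mult_2)
  finally show ?thesis .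
qed

lemma ennreal_le_add_mult_bound:
  fixes y A B H :: ennreal
  assumes "y \<le> A + ennreal s * B" "A \<le> ennreal a * H" "B \<le> H" "0 \<le> s" "0 \<le> a"
  shows "y \<le> ennreal (a + s) * H"
proof -
  have "y \<le> ennreal a * H + ennreal s * H"
    using assms by (meson add_mono mult_left_mono order_trans zero_le)
  also have "\<dots> = ennreal (a + s) * H"
    using assms by (simp add: ennreal_plus distrib_right)
  finally show ?thesis .
qed

lemma ennreal_divide_le_of_le_mult:
  assumes "ennreal y \<le> ennreal (c * j) * H" "0 < j" "0 \<le> c"
  shows "ennreal (y / j) \<le> ennreal c * H"
proof (cases "0 \<le> y")
  case True
  have "ennreal (y / j) = ennreal y * ennreal (1 / j)"
    using True assms by (simp add: ennreal_mult[symmetric])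
  also have "\<dots> \<le> ennreal (c * j) * ennreal (1 / j) * H"
    using mult_right_mono[OF assms(1), of "ennreal (1 / j)"] by (simp add: mult_ac)
  also have "ennreal (c * j) * ennreal (1 / j) = ennreal c"
    using assms by (simp add: ennreal_mult[symmetric])
  finally show ?thesis .
qed (use assms in \<open>simp add: ennreal_neg divide_nonpos_pos\<close>)

section \<open>The fundamental theorem of calculus on a ray\<close>

lemma norm_diff_le_nn_integral_deriv:
  fixes f :: "real \<Rightarrow> 'a::banach"
  assumes "a \<le> b"
    and "\<And>x. x \<in> {a..b} \<Longrightarrow> (f has_vector_derivative f' x) (at x)"
    and "continuous_on {a..b} f'"
  shows "ennreal (norm (f b - f a)) \<le> (\<integral>\<^sup>+x. ennreal (norm (f' x)) * indicator {a..b} x \<partial>lborel)"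
proof -
  have "(f' has_integral (f b - f a)) {a..b}"
    using assms by (intro fundamental_theorem_of_calculus) (auto intro: has_vector_derivative_at_within)
  moreover have int: "(\<lambda>x. norm (f' x)) integrable_on {a..b}"
    using assms(3) by (intro integrable_continuous_interval continuous_intros)
  ultimately have "norm (f b - f a) \<le> integral {a..b} (\<lambda>x. norm (f' x))"
    by (metis has_integral_integrable_integral integral_norm_bound_integral order_refl)
  moreover have "(\<integral>\<^sup>+x. ennreal (norm (f' x)) * indicator {a..b} x \<partial>lborel)
      = ennreal (integral {a..b} (\<lambda>x. norm (f' x)))"
    by (rule nn_integral_has_integral_lebesgue') (use int in auto)
  ultimately show ?thesis by (simp add: ennreal_leI)
qed

lemma norm_le_nn_integral_deriv_tail:
  fixes f :: "real \<Rightarrow> 'a::banach"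
  assumes "\<And>x. a \<le> x \<Longrightarrow> (f has_vector_derivative f' x) (at x)"
    and "continuous_on {a..} f'" and "(f \<longlongrightarrow> 0) at_top"
  shows "ennreal (norm (f a)) \<le> (\<integral>\<^sup>+x. ennreal (norm (f' x)) * indicator {a..} x \<partial>lborel)"
    (is "_ \<le> ?I")
proof (rule ennreal_le_epsilon)
  fix e :: real assume "0 < e"
  then obtain R where R: "a \<le> R" "norm (f R) < e"
    using assms(3) unfolding tendsto_iff dist_norm eventually_at_top_linorder
    by (metis diff_zero linorder_le_cases order.trans order.refl)
  have "ennreal (norm (f R - f a)) \<le> (\<integral>\<^sup>+x. ennreal (norm (f' x)) * indicator {a..R} x \<partial>lborel)"
    using R by (intro norm_diff_le_nn_integral_deriv) (auto intro: assms(1) continuous_on_subset[OF assms(2)])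
  also have "\<dots> \<le> ?I"
    by (intro nn_integral_mono) (auto simp: indicator_def)
  finally have "ennreal (norm (f R - f a)) \<le> ?I" .
  moreover have "norm (f a) \<le> norm (f R - f a) + e"
    using R norm_triangle_sub[of "f a" "f R"] by (simp add: norm_minus_commute)
  hence "ennreal (norm (f a)) \<le> ennreal (norm (f R - f a)) + ennreal e"
    using \<open>0 < e\<close> by (simp add: ennreal_plus[symmetric] ennreal_leI del: ennreal_plus)
  ultimately show "ennreal (norm (f a)) \<le> ?I + ennreal e"
    by (meson add_right_mono order_trans)
qed

lemma nn_integral_Cauchy_Schwarz_weighted:
  fixes g W :: "real \<Rightarrow> real"
  assumes [measurable]: "g \<in> borel_measurable borel" "W \<in> borel_measurable borel" "S \<in> sets borel"
    and "\<And>x. x \<in> S \<Longrightarrow> 0 < W x" and "\<And>x. 0 \<le> g x"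
  shows "(\<integral>\<^sup>+x. ennreal (g x) * indicator S x \<partial>lborel)^2 \<le>
     (\<integral>\<^sup>+x. ennreal (W x) * indicator S x \<partial>lborel) *
     (\<integral>\<^sup>+x. ennreal ((g x)^2 / W x) * indicator S x \<partial>lborel)"
proof -
  define F where "F x = ennreal (sqrt (W x)) * indicator S x" for x
  define G where "G x = ennreal (g x / sqrt (W x)) * indicator S x" for x
  have [measurable]: "F \<in> borel_measurable lborel" "G \<in> borel_measurable lborel"
    unfolding F_def G_def by measurable
  have "(\<integral>\<^sup>+x. ennreal (g x) * indicator S x \<partial>lborel) = (\<integral>\<^sup>+x. F x * G x \<partial>lborel)"
  proof (intro nn_integral_cong)
    fix x show "ennreal (g x) * indicator S x = F x * G x"
      using assms(4)[of x] by (cases "x \<in> S") (auto simp: F_def G_def ennreal_mult'[symmetric])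
  qed
  moreover have "(\<integral>\<^sup>+x. F x ^ 2 \<partial>lborel) = (\<integral>\<^sup>+x. ennreal (W x) * indicator S x \<partial>lborel)"
    using assms(4)
    by (intro nn_integral_cong) (auto simp: F_def indicator_def ennreal_power less_imp_le)
  moreover have "(\<integral>\<^sup>+x. G x ^ 2 \<partial>lborel) = (\<integral>\<^sup>+x. ennreal ((g x)^2 / W x) * indicator S x \<partial>lborel)"
    using assms(4,5)
    by (intro nn_integral_cong) (auto simp: G_def indicator_def ennreal_power power_divide less_imp_le)
  ultimately show ?thesis using Cauchy_Schwarz_nn_integral[of F lborel G] by simp
qed

lemma nn_integral_interval_le_const_mult:
  assumes "a \<le> b" "0 \<le> K" "\<And>x. x \<in> {a..b} \<Longrightarrow> W x \<le> K"
  shows "(\<integral>\<^sup>+x. ennreal (W x) * indicator {a..b} x \<partial>lborel) \<le> ennreal (K * (b - a))"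
proof -
  have "(\<integral>\<^sup>+x. ennreal (W x) * indicator {a..b} x \<partial>lborel) \<le> (\<integral>\<^sup>+x. ennreal K * indicator {a..b} x \<partial>lborel)"
    by (intro nn_integral_mono) (auto simp: indicator_def intro!: ennreal_leI assms(3))
  also have "\<dots> = ennreal (K * (b - a))"
    using assms by (simp add: nn_integral_cmult_indicator ennreal_mult)
  finally show ?thesis .
qed

lemma nn_integral_inverse_interval:
  assumes "0 < a" "a \<le> b"
  shows "(\<integral>\<^sup>+x. ennreal (1 / x) * indicator {a..b} x \<partial>lborel) = ennreal (ln b - ln a)"
proof -
  have "((\<lambda>x. 1 / x) has_integral (ln b - ln a)) {a..b}"
    using assms
    by (intro fundamental_theorem_of_calculus)
       (auto intro!: derivative_eq_intros intro: has_field_derivative_at_within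
             simp: has_real_derivative_iff_has_vector_derivative[symmetric] field_simps)
  from nn_integral_has_integral_lebesgue'[OF _ this] show ?thesis using assms by simp
qed

lemma nn_integral_inverse_sq_tail:
  assumes "0 < t"
  shows "(\<integral>\<^sup>+s. ennreal (1 / s^2) * indicator {t..} s \<partial>lborel) = ennreal (1 / t)"
proof -
  have "((\<lambda>x. 1 / x ^ 2) has_integral 1 / (real (2 - 1) * t ^ (2 - 1))) {t..}"
    by (rule has_integral_inverse_power_to_inf) (use assms in auto)
  hence "((\<lambda>x. 1 / x ^ 2) has_integral 1 / t) {t..}" by simp
  from nn_integral_has_integral_lebesgue'[OF _ this] show ?thesis using assms by simp
qed

lemma has_vector_derivative_norm_sq:
  fixes f :: "real \<Rightarrow> 'a::real_inner"
  assumes "(f has_vector_derivative f') (at x)"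
  shows "((\<lambda>x. (norm (f x))^2) has_vector_derivative 2 * inner (f x) f') (at x)"
proof -
  have D: "(f has_derivative (\<lambda>h. h *\<^sub>R f')) (at x)"
    using assms by (simp add: has_vector_derivative_def)
  have "((\<lambda>x. inner (f x) (f x)) has_derivative (\<lambda>h. inner (f x) (h *\<^sub>R f') + inner (h *\<^sub>R f') (f x))) (at x)"
    using has_derivative_inner[OF D D] .
  moreover have "(\<lambda>h. inner (f x) (h *\<^sub>R f') + inner (h *\<^sub>R f') (f x)) = (\<lambda>h. h *\<^sub>R (2 * inner (f x) f'))"
    by (auto simp: inner_commute algebra_simps)
  ultimately show ?thesis by (simp add: has_vector_derivative_def power2_norm_eq_inner)
qed

lemma abs_two_inner_le: "\<bar>2 * inner (a::'a::real_inner) b\<bar> \<le> 2 * norm a * norm b"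
  using Cauchy_Schwarz_ineq2[of a b] by simp

lemma sq_norm_diff_le_nn_integral:
  fixes f :: "real \<Rightarrow> 'a::real_inner"
  assumes "a \<le> b" "\<And>x. x \<in> {a..b} \<Longrightarrow> (f has_vector_derivative f' x) (at x)"
    and "continuous_on {a..b} f'"
  shows "ennreal \<bar>(norm (f b))^2 - (norm (f a))^2\<bar>
    \<le> (\<integral>\<^sup>+x. ennreal (2 * norm (f x) * norm (f' x)) * indicator {a..b} x \<partial>lborel)"
proof -
  have "continuous_on {a..b} f"
    using assms(2) by (intro continuous_at_imp_continuous_on) (blast intro: has_vector_derivative_continuous)
  hence "ennreal (norm ((norm (f b))^2 - (norm (f a))^2))
      \<le> (\<integral>\<^sup>+x. ennreal (norm (2 * inner (f x) (f' x))) * indicator {a..b} x \<partial>lborel)"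
    using assms by (intro norm_diff_le_nn_integral_deriv has_vector_derivative_norm_sq continuous_intros) auto
  also have "\<dots> \<le> (\<integral>\<^sup>+x. ennreal (2 * norm (f x) * norm (f' x)) * indicator {a..b} x \<partial>lborel)"
    by (intro nn_integral_mono mult_right_mono ennreal_leI) (simp_all add: abs_two_inner_le)
  finally show ?thesis by simp
qed

lemma sq_norm_le_nn_integral_tail:
  fixes f :: "real \<Rightarrow> 'a::real_inner"
  assumes "\<And>x. a \<le> x \<Longrightarrow> (f has_vector_derivative f' x) (at x)"
    and "continuous_on {a..} f'" and "(f \<longlongrightarrow> 0) at_top"
  shows "ennreal ((norm (f a))^2)
    \<le> (\<integral>\<^sup>+x. ennreal (2 * norm (f x) * norm (f' x)) * indicator {a..} x \<partial>lborel)"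
proof -
  have "continuous_on {a..} f"
    using assms(1) by (intro continuous_at_imp_continuous_on) (blast intro: has_vector_derivative_continuous)
  moreover have "((\<lambda>x. (norm (f x))^2) \<longlongrightarrow> 0) at_top"
    using tendsto_power[OF tendsto_norm[OF assms(3)], of 2] by simp
  ultimately have "ennreal (norm ((norm (f a))^2))
      \<le> (\<integral>\<^sup>+x. ennreal (norm (2 * inner (f x) (f' x))) * indicator {a..} x \<partial>lborel)"
    using assms by (intro norm_le_nn_integral_deriv_tail has_vector_derivative_norm_sq continuous_intros) auto
  also have "\<dots> \<le> (\<integral>\<^sup>+x. ennreal (2 * norm (f x) * norm (f' x)) * indicator {a..} x \<partial>lborel)"
    by (intro nn_integral_mono mult_right_mono ennreal_leI) (simp_all add: abs_two_inner_le)
  finally show ?thesis by simp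
qed

section \<open>Radial energies and logarithmic weights\<close>

lemma L2_sq: "(L2 f)^2 = (\<integral>\<^sup>+r. ennreal (2*pi*r*(norm (f r))^2) * indicator {0<..} r \<partial>lborel)"
  by (simp add: L2_def ennsqrt_sq)

lemma nn_integral_le_cmult_L2_sq:
  fixes \<phi> :: "real \<Rightarrow> real" and f :: "real \<Rightarrow> 'a::real_normed_vector"
  assumes [measurable]: "\<phi> \<in> borel_measurable borel" "S \<in> sets borel"
    and "S \<subseteq> {0<..}" "0 < c" and "\<And>x. x \<in> S \<Longrightarrow> \<phi> x \<le> c * (2*pi*x*(norm (f x))^2)"
  shows "(\<integral>\<^sup>+x. ennreal (\<phi> x) * indicator S x \<partial>lborel) \<le> ennreal c * (L2 f)^2"
proof -
  have "(\<integral>\<^sup>+x. ennreal (\<phi> x) * indicator S x \<partial>lborel)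
      = (\<integral>\<^sup>+x. ennreal c * (ennreal (\<phi> x / c) * indicator S x) \<partial>lborel)"
    using \<open>0 < c\<close> by (intro nn_integral_cong) (simp add: ennreal_mult'[symmetric] mult.assoc[symmetric])
  also have "\<dots> = ennreal c * (\<integral>\<^sup>+x. ennreal (\<phi> x / c) * indicator S x \<partial>lborel)"
    by (rule nn_integral_cmult) measurable
  also have "\<dots> \<le> ennreal c * (L2 f)^2"
    unfolding L2_sq
  proof (intro mult_left_mono nn_integral_mono)
    fix x
    show "ennreal (\<phi> x / c) * indicator S x \<le> ennreal (2*pi*x*(norm (f x))^2) * indicator {0<..} x"
      using assms(5)[of x] assms(3,4) by (cases "x \<in> S") (auto simp: divide_le_eq mult.commute intro!: ennreal_leI)
  qed simp
  finally show ?thesis .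
qed

lemma two_mult_le_energy_density:
  fixes x a b c :: real
  assumes "0 < x" "0 \<le> a" "0 \<le> b" "a \<le> x * c"
  shows "2 * a * b \<le> 2*pi*x*c^2 + 2*pi*x*b^2"
proof -
  have "2 * a * b \<le> 2 * (x * c) * b" using assms by (intro mult_right_mono) auto
  also have "\<dots> \<le> x * (c^2 + b^2)"
    using mult_left_mono[OF sum_squares_bound[of c b], of x] assms(1) by (simp add: algebra_simps)
  also have "\<dots> \<le> 2*pi*x*(c^2 + b^2)"
    using pi_gt3 assms(1) by (intro mult_right_mono) auto
  finally show ?thesis by (simp add: algebra_simps)
qed

lemma nn_integral_two_norm_mult_le_L2_sq:
  fixes f h :: "real \<Rightarrow> 'a::real_normed_vector" and g :: "real \<Rightarrow> 'b::real_normed_vector"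
  assumes [measurable]: "g \<in> borel_measurable borel" "h \<in> borel_measurable borel"
    and "S \<subseteq> {0<..}" and "\<And>x. x \<in> S \<Longrightarrow> norm (f x) \<le> x * norm (g x)"
  shows "(\<integral>\<^sup>+x. ennreal (2 * norm (f x) * norm (h x)) * indicator S x \<partial>lborel) \<le> (L2 g)^2 + (L2 h)^2"
proof -
  have "(\<integral>\<^sup>+x. ennreal (2 * norm (f x) * norm (h x)) * indicator S x \<partial>lborel) \<le>
      (\<integral>\<^sup>+x. ennreal (2*pi*x*(norm (g x))^2) * indicator {0<..} x
             + ennreal (2*pi*x*(norm (h x))^2) * indicator {0<..} x \<partial>lborel)"
  proof (intro nn_integral_mono)
    fix x
    show "ennreal (2 * norm (f x) * norm (h x)) * indicator S x \<le>
        ennreal (2*pi*x*(norm (g x))^2) * indicator {0<..} x + ennreal (2*pi*x*(norm (h x))^2) * indicator {0<..} x"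
    proof (cases "x \<in> S")
      case True
      with assms(3,4) have "0 < x" "2 * norm (f x) * norm (h x) \<le> 2*pi*x*(norm (g x))^2 + 2*pi*x*(norm (h x))^2"
        by (auto intro: two_mult_le_energy_density)
      then show ?thesis using True by (simp add: ennreal_plus[symmetric] ennreal_leI del: ennreal_plus)
    qed simp
  qed
  also have "\<dots> = (L2 g)^2 + (L2 h)^2"
    unfolding L2_sq by (rule nn_integral_add) measurable
  finally show ?thesis .
qed

lemma jb_sq: "(jb a)^2 = 1 + a^2"
  by (simp add: jb_def)

lemma jb_ge_1: "1 \<le> jb a"
  by (simp add: jb_def)

lemma jb_pos: "0 < jb a"
  using jb_ge_1[of a] by linarith

lemma sqrt_le_jb:
  assumes "0 \<le> t"
  shows "sqrt t \<le> jb t"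
proof -
  have "0 \<le> (t - 1)^2" by simp
  then have "t \<le> 1 + t^2" using assms by (simp add: power2_eq_square algebra_simps)
  then show ?thesis unfolding jb_def by (rule real_sqrt_le_mono)
qed

lemma borel_measurable_jb [measurable]: "jb \<in> borel_measurable borel"
  unfolding jb_def by measurable

lemma borel_measurable_logm [measurable]: "logm \<in> borel_measurable borel"
  unfolding logm_def by measurable

lemma borel_measurable_logp [measurable]: "logp \<in> borel_measurable borel"
  unfolding logp_def by measurable

definition log_weight :: "nat \<Rightarrow> real \<Rightarrow> real" where
  "log_weight k x = x ^ (2*k+1) * (jb (ln x))^2"

lemma borel_measurable_log_weight [measurable]: "log_weight k \<in> borel_measurable borel"
  unfolding log_weight_def by measurable

lemma log_weight_pos: "0 < x \<Longrightarrow> 0 < log_weight k x"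
  unfolding log_weight_def by (intro mult_pos_pos zero_less_power jb_pos)

lemma sq_ln_le:
  fixes x :: real
  assumes "0 < x"
  shows "(ln x)^2 \<le> 4 / x + x^2"
proof (cases "1 \<le> x")
  case True
  have "(ln x)^2 \<le> x^2"
    using True ln_le_minus_one[OF assms] by (intro power_mono) auto
  then show ?thesis using assms by (smt (verit) divide_pos_pos)
next
  case False
  have "ln (1 / sqrt x) \<le> 1 / sqrt x - 1" using assms by (intro ln_le_minus_one) simp
  moreover have "ln (1 / sqrt x) = - ln x / 2" using assms by (simp add: ln_div ln_sqrt)
  ultimately have "- ln x \<le> 2 / sqrt x" by (simp add: field_simps)
  moreover have "0 \<le> - ln x" using False assms by simp
  ultimately have "(- ln x)^2 \<le> (2 / sqrt x)^2" by (intro power_mono) auto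
  also have "(2 / sqrt x)^2 = 4 / x" using assms by (simp add: power_divide)
  finally show ?thesis by (smt (verit) zero_le_power2 power2_minus)
qed

lemma log_weight_le:
  assumes "0 < x" "x \<le> 2"
  shows "log_weight k x \<le> 14 * 4^k"
proof -
  have "x * (1 + (ln x)^2) \<le> x * (1 + (4 / x + x^2))"
    using sq_ln_le[OF assms(1)] assms by (intro mult_left_mono) auto
  also have "\<dots> = x + 4 + x * x^2" using assms by (simp add: field_simps power2_eq_square)
  also have "\<dots> \<le> 2 + 4 + 2 * 2^2"
    using assms by (intro add_mono mult_mono power_mono) auto
  finally have "x * (jb (ln x))^2 \<le> 14" by (simp add: jb_sq)
  moreover have "x ^ (2*k) \<le> 4^k"
    using power_mono[OF assms(2), of "2*k"] assms(1) by (simp add: power_mult)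
  ultimately have "x ^ (2*k) * (x * (jb (ln x))^2) \<le> 4^k * 14"
    using assms(1) by (intro mult_mono) auto
  then show ?thesis by (simp add: log_weight_def mult_ac)
qed

lemma log_weight_mono:
  assumes "1 \<le> x" "x \<le> r"
  shows "log_weight k x \<le> log_weight k r"
proof -
  have "(ln x)^2 \<le> (ln r)^2" using assms by (intro power_mono) auto
  then have "(jb (ln x))^2 \<le> (jb (ln r))^2" by (simp add: jb_sq)
  moreover have "x ^ (2*k+1) \<le> r ^ (2*k+1)" using assms by (intro power_mono) auto
  ultimately show ?thesis unfolding log_weight_def using assms by (intro mult_mono) auto
qed

lemma nn_integral_log_weight_le:
  assumes "1 \<le> r"
  shows "(\<integral>\<^sup>+x. ennreal (log_weight k x) * indicator {1..r} x \<partial>lborel) \<le> ennreal ((r^(k+1) * jb (ln r))^2)"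
proof -
  have "(\<integral>\<^sup>+x. ennreal (log_weight k x) * indicator {1..r} x \<partial>lborel) \<le> ennreal (log_weight k r * (r - 1))"
    using assms log_weight_pos[of r k] by (intro nn_integral_interval_le_const_mult log_weight_mono) auto
  also have "\<dots> \<le> ennreal (log_weight k r * r)"
    using assms log_weight_pos[of r k] by (intro ennreal_leI mult_left_mono) auto
  also have "log_weight k r * r = r^(2*k+2) * (jb (ln r))^2"
    by (simp add: log_weight_def mult_ac flip: power_Suc2)
  also have "2*k+2 = (k+1)*2" by simp
  finally show ?thesis by (simp only: power_mult power_mult_distrib)
qed

lemma sq_div_log_weight_le:
  fixes x a w :: real
  assumes "0 < x" "0 \<le> a" "a \<le> x^k * w"
  shows "a^2 / log_weight k x \<le> 2*pi*x*(norm (w / (x * jb (ln x))))^2"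
proof -
  have J: "0 < x * (jb (ln x))^2" using assms(1) by (intro mult_pos_pos zero_less_power jb_pos)
  have "a^2 \<le> (x^k * w)^2" using assms by (intro power_mono) auto
  then have "a^2 / log_weight k x \<le> (x^k * w)^2 / log_weight k x"
    using log_weight_pos[OF assms(1), of k] by (intro divide_right_mono) auto
  also have "\<dots> = (x^(2*k) * w^2) / (x^(2*k) * (x * (jb (ln x))^2))"
    by (simp add: log_weight_def power_mult_distrib power_mult[symmetric] power_add mult_ac)
  also have "\<dots> = w^2 / (x * (jb (ln x))^2)"
    using assms(1) by simp
  also have "\<dots> \<le> 2 * pi * (w^2 / (x * (jb (ln x))^2))"
    using mult_right_mono[of 1 "2*pi" "w^2 / (x * (jb (ln x))^2)"] pi_gt3 J by simp
  also have "\<dots> = 2*pi*x*(norm (w / (x * jb (ln x))))^2"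
    using assms(1) jb_pos[of "ln x"] by (simp add: power_divide power_mult_distrib field_simps power2_eq_square)
  finally show ?thesis .
qed

lemma sq_le_log_weight_density:
  fixes x a w :: real
  assumes "0 < x" "x \<le> 2" "0 \<le> a" "a \<le> x^k * w"
  shows "a^2 \<le> 14 * 4^k * (2*pi*x*(norm (w / (x * jb (ln x))))^2)"
proof -
  have "a^2 = a^2 / log_weight k x * log_weight k x"
    using log_weight_pos[OF assms(1), of k] by simp
  also have "\<dots> \<le> 2*pi*x*(norm (w / (x * jb (ln x))))^2 * (14 * 4^k)"
    using assms log_weight_pos[OF assms(1), of k]
    by (intro mult_mono sq_div_log_weight_le log_weight_le) auto
  finally show ?thesis by (simp add: mult_ac)
qed

lemma sq_norm_le_H30_density:
  fixes z :: complex
  assumes "1 \<le> x" "x \<le> 2"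
  shows "(norm z)^2 \<le> 20 * (2*pi*x*(norm (z / complex_of_real (x * (jb x)^2 * jb (ln x))))^2)"
proof -
  define p where "p = x * (jb x)^2 * jb (ln x)"
  have p: "0 < p" unfolding p_def using assms by (intro mult_pos_pos zero_less_power jb_pos) auto
  have "0 \<le> ln x" "ln x \<le> 1" using assms ln_le_minus_one[of x] by auto
  then have "(ln x)^2 \<le> 1" by (simp add: power_le_one)
  then have "x * (1 + x^2)^2 * (1 + (ln x)^2) \<le> 2 * (1 + 2^2)^2 * (1 + 1)"
    using assms by (intro mult_mono power_mono add_mono) auto
  also have "\<dots> \<le> 40 * pi" using pi_gt3 by simp
  finally have "x * (x * (1 + x^2)^2 * (1 + (ln x)^2)) \<le> x * (40 * pi)"
    using assms by (intro mult_left_mono) auto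
  moreover have "p^2 = x * (x * (1 + x^2)^2 * (1 + (ln x)^2))"
    unfolding p_def power_mult_distrib jb_sq by (simp add: power2_eq_square mult_ac)
  ultimately have "(norm z)^2 * p^2 \<le> (norm z)^2 * (40 * pi * x)"
    by (intro mult_left_mono) (simp_all add: mult_ac)
  then have "(norm z)^2 \<le> (norm z)^2 * (40 * pi * x) / p^2"
    using p by (simp add: pos_le_divide_eq)
  also have "\<dots> = 20 * (2*pi*x*(norm (z / complex_of_real p))^2)"
    using p by (simp add: norm_divide power_divide)
  finally show ?thesis unfolding p_def .
qed

section \<open>Pointwise bounds from weighted energies\<close>

lemma sq_norm_diff_le_weighted_L2_sq:
  fixes f :: "real \<Rightarrow> 'a::banach" and g :: "real \<Rightarrow> 'b::real_normed_vector"
  assumes "0 < a" "a \<le> b"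
    and "\<And>x. x \<in> {a..b} \<Longrightarrow> (f has_vector_derivative f' x) (at x)" "continuous_on {a..b} f'"
    and [measurable]: "f' \<in> borel_measurable borel" "W \<in> borel_measurable borel"
    and "\<And>x. x \<in> {a..b} \<Longrightarrow> 0 < W x"
    and "(\<integral>\<^sup>+x. ennreal (W x) * indicator {a..b} x \<partial>lborel) \<le> ennreal M"
    and "\<And>x. x \<in> {a..b} \<Longrightarrow> (norm (f' x))^2 / W x \<le> 2*pi*x*(norm (g x))^2"
  shows "(ennreal (norm (f b - f a)))^2 \<le> ennreal M * (L2 g)^2"
proof -
  have "(ennreal (norm (f b - f a)))^2 \<le> (\<integral>\<^sup>+x. ennreal (norm (f' x)) * indicator {a..b} x \<partial>lborel)^2"
    using assms(2-4) by (intro power_mono norm_diff_le_nn_integral_deriv) simp_all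
  also have "\<dots> \<le> (\<integral>\<^sup>+x. ennreal (W x) * indicator {a..b} x \<partial>lborel) *
      (\<integral>\<^sup>+x. ennreal ((norm (f' x))^2 / W x) * indicator {a..b} x \<partial>lborel)"
    using assms(7) by (intro nn_integral_Cauchy_Schwarz_weighted) simp_all
  also have "\<dots> \<le> ennreal M * (ennreal 1 * (L2 g)^2)"
  proof (intro mult_mono nn_integral_le_cmult_L2_sq)
    show "{a..b} \<subseteq> {0<..}" using assms(1) by auto
  qed (use assms(8,9) in simp_all)
  finally show ?thesis by simp
qed

lemma norm_le_norm_add_weighted_L2:
  fixes f :: "real \<Rightarrow> 'a::banach" and g :: "real \<Rightarrow> 'b::real_normed_vector"
  assumes "0 < a" "a \<le> b"
    and "\<And>x. x \<in> {a..b} \<Longrightarrow> (f has_vector_derivative f' x) (at x)" "continuous_on {a..b} f'"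
    and [measurable]: "f' \<in> borel_measurable borel" "W \<in> borel_measurable borel"
    and "\<And>x. x \<in> {a..b} \<Longrightarrow> 0 < W x"
    and "(\<integral>\<^sup>+x. ennreal (W x) * indicator {a..b} x \<partial>lborel) \<le> ennreal M" "0 \<le> M"
    and "\<And>x. x \<in> {a..b} \<Longrightarrow> (norm (f' x))^2 / W x \<le> 2*pi*x*(norm (g x))^2"
  shows "ennreal (norm (f b)) \<le> ennreal (norm (f a)) + ennreal (sqrt M) * L2 g"
proof -
  have "(ennreal (norm (f b - f a)))^2 \<le> ennreal M * (L2 g)^2"
    by (rule sq_norm_diff_le_weighted_L2_sq[where W=W]) (fact assms)+
  then have "ennreal (norm (f b - f a)) \<le> ennreal (sqrt M) * L2 g"
    by (rule ennreal_le_mult_of_sq_le) (simp_all add: \<open>0 \<le> M\<close>)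
  moreover have "ennreal (norm (f b)) \<le> ennreal (norm (f a)) + ennreal (norm (f b - f a))"
    using norm_triangle_sub[of "f b" "f a"]
    by (simp add: ennreal_plus[symmetric] ennreal_leI del: ennreal_plus)
  ultimately show ?thesis by (meson add_left_mono order_trans)
qed

lemma sq_norm_le_average_add_weighted_L2_sq:
  fixes f :: "real \<Rightarrow> 'a::banach" and g :: "real \<Rightarrow> 'b::real_normed_vector"
    and h :: "real \<Rightarrow> 'c::real_normed_vector"
  assumes "0 < a" "a \<le> 1"
    and "\<And>x. x \<in> {a..2} \<Longrightarrow> (f has_vector_derivative f' x) (at x)" "continuous_on {a..2} f'"
    and [measurable]: "f \<in> borel_measurable borel" "f' \<in> borel_measurable borel" "W \<in> borel_measurable borel"
    and "\<And>x. x \<in> {a..2} \<Longrightarrow> 0 < W x"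
    and "(\<integral>\<^sup>+x. ennreal (W x) * indicator {a..2} x \<partial>lborel) \<le> ennreal M" "0 \<le> M"
    and "\<And>x. x \<in> {a..2} \<Longrightarrow> (norm (f' x))^2 / W x \<le> 2*pi*x*(norm (g x))^2"
    and "0 < c" "\<And>x. x \<in> {1..2} \<Longrightarrow> (norm (f x))^2 \<le> c * (2*pi*x*(norm (h x))^2)"
  shows "(ennreal (norm (f a)))^2 \<le> ennreal (2*c) * (L2 h)^2 + ennreal (2*M) * (L2 g)^2"
proof -
  let ?E = "ennreal (2*M) * (L2 g)^2"
  have pointwise: "(ennreal (norm (f a)))^2 \<le> 2 * ennreal ((norm (f s))^2) + ?E" if s: "s \<in> {1..2}" for s
  proof -
    have D: "(ennreal (norm (f s - f a)))^2 \<le> ennreal M * (L2 g)^2"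
    proof (rule sq_norm_diff_le_weighted_L2_sq[where W=W])
      show "a \<le> s" using assms(2) s by simp
      show "(f has_vector_derivative f' x) (at x)" if "x \<in> {a..s}" for x
        using that s by (intro assms(3)) simp
      show "continuous_on {a..s} f'"
        using s by (intro continuous_on_subset[OF assms(4)]) auto
      show "0 < W x" if "x \<in> {a..s}" for x
        using that s by (intro assms(8)) simp
      show "(norm (f' x))^2 / W x \<le> 2*pi*x*(norm (g x))^2" if "x \<in> {a..s}" for x
        using that s by (intro assms(11)) simp
      have "(\<integral>\<^sup>+x. ennreal (W x) * indicator {a..s} x \<partial>lborel) \<le> (\<integral>\<^sup>+x. ennreal (W x) * indicator {a..2} x \<partial>lborel)"
        using s by (intro nn_integral_mono) (auto simp: indicator_def)
      then show "(\<integral>\<^sup>+x. ennreal (W x) * indicator {a..s} x \<partial>lborel) \<le> ennreal M"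
        using assms(9) by (rule order_trans)
    qed (fact assms)+
    have "ennreal (norm (f a)) \<le> ennreal (norm (f s)) + ennreal (norm (f s - f a))"
      using norm_triangle_sub[of "f a" "f s"]
      by (simp add: ennreal_plus[symmetric] ennreal_leI norm_minus_commute del: ennreal_plus)
    then have "(ennreal (norm (f a)))^2 \<le> 2 * (ennreal (norm (f s)))^2 + 2 * (ennreal (norm (f s - f a)))^2"
      by (rule ennreal_sq_le_two_sq_add)
    also have "\<dots> \<le> 2 * ennreal ((norm (f s))^2) + 2 * (ennreal M * (L2 g)^2)"
      using D by (simp add: ennreal_power add_left_mono mult_left_mono)
    also have "2 * (ennreal M * (L2 g)^2) = ?E"
      using \<open>0 \<le> M\<close> by (simp add: ennreal_mult mult.assoc)
    finally show ?thesis .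
  qed
  have "(ennreal (norm (f a)))^2 = (\<integral>\<^sup>+s. (ennreal (norm (f a)))^2 * indicator {1..2::real} s \<partial>lborel)"
    by (simp add: nn_integral_cmult_indicator)
  also have "\<dots> \<le> (\<integral>\<^sup>+s. (2 * ennreal ((norm (f s))^2) + ?E) * indicator {1..2} s \<partial>lborel)"
    using pointwise by (intro nn_integral_mono) (simp add: indicator_def)
  also have "\<dots> = 2 * (\<integral>\<^sup>+s. ennreal ((norm (f s))^2) * indicator {1..2} s \<partial>lborel) + ?E"
    by (simp add: distrib_right nn_integral_add nn_integral_cmult nn_integral_cmult_indicator mult.assoc)
  also have "\<dots> \<le> 2 * (ennreal c * (L2 h)^2) + ?E"
  proof (intro add_right_mono mult_left_mono nn_integral_le_cmult_L2_sq)
    show "(norm (f x))^2 \<le> c * (2*pi*x*(norm (h x))^2)" if "x \<in> {1..2}" for x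
      using that by (fact assms(13))
  qed (use \<open>0 < c\<close> in \<open>simp_all add: subset_iff\<close>)
  also have "\<dots> = ennreal (2*c) * (L2 h)^2 + ?E"
    using \<open>0 < c\<close> by (simp add: ennreal_mult mult.assoc)
  finally show ?thesis .
qed

lemma sq_div_inverse_le_energy_density:
  fixes x b :: real
  assumes "0 < x"
  shows "b^2 / (1 / x) \<le> 2*pi*x*b^2"
  using mult_right_mono[of 1 "2*pi" "x * b^2"] pi_gt3 assms by (simp add: mult_ac)

lemma norm_le_norm_add_sqrt_ln_L2:
  fixes f :: "real \<Rightarrow> 'a::banach"
  assumes "1 \<le> r" "\<And>x. x \<in> {1..r} \<Longrightarrow> (f has_vector_derivative f' x) (at x)"
    and "continuous_on {1..r} f'" "f' \<in> borel_measurable borel"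
  shows "ennreal (norm (f r)) \<le> ennreal (norm (f 1)) + ennreal (sqrt (ln r)) * L2 f'"
proof (rule norm_le_norm_add_weighted_L2[where W = "\<lambda>x. 1 / x"])
  show "(\<integral>\<^sup>+x. ennreal (1 / x) * indicator {1..r} x \<partial>lborel) \<le> ennreal (ln r)"
    using assms(1) by (simp add: nn_integral_inverse_interval)
  show "(norm (f' x))^2 / (1 / x) \<le> 2*pi*x*(norm (f' x))^2" if "x \<in> {1..r}" for x
    using that by (intro sq_div_inverse_le_energy_density) simp
qed (use assms in simp_all)

lemma norm_le_norm_add_log_weight_L2:
  fixes f :: "real \<Rightarrow> 'a::banach" and w :: "real \<Rightarrow> real"
  assumes "1 \<le> r" "\<And>x. x \<in> {1..r} \<Longrightarrow> (f has_vector_derivative f' x) (at x)"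
    and "continuous_on {1..r} f'" "f' \<in> borel_measurable borel"
    and "\<And>x. x \<in> {1..r} \<Longrightarrow> norm (f' x) \<le> x^k * w x"
  shows "ennreal (norm (f r)) \<le> ennreal (norm (f 1)) + ennreal (r^(k+1) * jb (ln r)) * L2 (\<lambda>x. w x / (x * jb (ln x)))"
proof -
  have "ennreal (norm (f r)) \<le> ennreal (norm (f 1)) +
      ennreal (sqrt ((r^(k+1) * jb (ln r))^2)) * L2 (\<lambda>x. w x / (x * jb (ln x)))"
  proof (rule norm_le_norm_add_weighted_L2[where W = "log_weight k"])
    show "(\<integral>\<^sup>+x. ennreal (log_weight k x) * indicator {1..r} x \<partial>lborel) \<le> ennreal ((r^(k+1) * jb (ln r))^2)"
      using assms(1) by (rule nn_integral_log_weight_le)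
    show "(norm (f' x))^2 / log_weight k x \<le> 2*pi*x*(norm (w x / (x * jb (ln x))))^2" if "x \<in> {1..r}" for x
      using that assms(5)[OF that] by (intro sq_div_log_weight_le) auto
  qed (use assms in \<open>simp_all add: log_weight_pos\<close>)
  then show ?thesis using assms(1) jb_pos[of "ln r"] by simp
qed

lemma sq_norm_le_log_weight_average:
  fixes f :: "real \<Rightarrow> 'a::banach" and w :: "real \<Rightarrow> real" and h :: "real \<Rightarrow> 'c::real_normed_vector"
  assumes "0 < a" "a \<le> 1"
    and "\<And>x. x \<in> {a..2} \<Longrightarrow> (f has_vector_derivative f' x) (at x)" "continuous_on {a..2} f'"
    and "f \<in> borel_measurable borel" "f' \<in> borel_measurable borel"
    and "\<And>x. x \<in> {a..2} \<Longrightarrow> norm (f' x) \<le> x^k * w x"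
    and "0 < c" "\<And>x. x \<in> {1..2} \<Longrightarrow> (norm (f x))^2 \<le> c * (2*pi*x*(norm (h x))^2)"
  shows "(ennreal (norm (f a)))^2 \<le>
    ennreal (2*c) * (L2 h)^2 + ennreal (56 * 4^k) * (L2 (\<lambda>x. w x / (x * jb (ln x))))^2"
proof -
  have "(ennreal (norm (f a)))^2 \<le>
      ennreal (2*c) * (L2 h)^2 + ennreal (2 * (28 * 4^k)) * (L2 (\<lambda>x. w x / (x * jb (ln x))))^2"
  proof (rule sq_norm_le_average_add_weighted_L2_sq[where W = "log_weight k"])
    have "(\<integral>\<^sup>+x. ennreal (log_weight k x) * indicator {a..2} x \<partial>lborel) \<le> ennreal (14 * 4^k * (2 - a))"
      using assms(1,2) by (intro nn_integral_interval_le_const_mult log_weight_le) auto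
    also have "\<dots> \<le> ennreal (28 * 4^k)"
      using assms(1) by (intro ennreal_leI) simp
    finally show "(\<integral>\<^sup>+x. ennreal (log_weight k x) * indicator {a..2} x \<partial>lborel) \<le> ennreal (28 * 4^k)" .
    show "(norm (f' x))^2 / log_weight k x \<le> 2*pi*x*(norm (w x / (x * jb (ln x))))^2" if "x \<in> {a..2}" for x
      using that assms(1) assms(7)[OF that] by (intro sq_div_log_weight_le) auto
  qed (use assms in \<open>simp_all add: log_weight_pos\<close>)
  then show ?thesis by simp
qed

lemma norm_le_log_growth_bound:
  fixes f :: "real \<Rightarrow> 'a::banach" and w :: "real \<Rightarrow> real"
  assumes "1 \<le> r" "\<And>x. 1 \<le> x \<Longrightarrow> (f has_vector_derivative f' x) (at x)" "continuous_on {1..} f'"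
    and [measurable]: "f \<in> borel_measurable borel" "f' \<in> borel_measurable borel"
    and "\<And>x. x \<in> {1..2} \<Longrightarrow> norm (f x) \<le> w x"
    and "L2 (\<lambda>x. w x / (x * jb (ln x))) + L2 f' \<le> H"
  shows "ennreal (norm (f r)) \<le> ennreal (7 * jb (ln r)) * H"
proof -
  have "(ennreal (norm (f 1)))^2 \<le> ennreal (2*14) * (L2 (\<lambda>x. w x / (x * jb (ln x))))^2 + ennreal (2*1) * (L2 f')^2"
  proof (rule sq_norm_le_average_add_weighted_L2_sq[where W = "\<lambda>x. 1 / x"])
    have "(\<integral>\<^sup>+x. ennreal (1 / x) * indicator {1..2} x \<partial>lborel) = ennreal (ln 2)"
      by (simp add: nn_integral_inverse_interval)
    also have "\<dots> \<le> ennreal 1"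
      using ln_2_less_1 by (intro ennreal_leI) simp
    finally show "(\<integral>\<^sup>+x. ennreal (1 / x) * indicator {1..2} x \<partial>lborel) \<le> ennreal 1" .
    show "(norm (f' x))^2 / (1 / x) \<le> 2*pi*x*(norm (f' x))^2" if "x \<in> {1..2}" for x
      using that by (intro sq_div_inverse_le_energy_density) simp
    show "(norm (f x))^2 \<le> 14 * (2*pi*x*(norm (w x / (x * jb (ln x))))^2)" if "x \<in> {1..2}" for x
      using that assms(6)[OF that] sq_le_log_weight_density[of x "norm (f x)" 0 "w x"] by simp
  qed (use assms(2,3) in \<open>auto intro: continuous_on_subset\<close>)
  then have "ennreal (norm (f 1)) \<le> ennreal 6 * (L2 (\<lambda>x. w x / (x * jb (ln x))) + L2 f')"
    by (rule ennreal_le_mult_add_of_sq_le) simp_all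
  also have "\<dots> \<le> ennreal 6 * H"
    using assms(7) by (rule mult_left_mono) simp
  finally have at_1: "ennreal (norm (f 1)) \<le> ennreal 6 * H" .
  have "L2 f' \<le> H"
    using assms(7) by (rule order_trans[rotated]) simp
  have "ennreal (norm (f r)) \<le> ennreal (norm (f 1)) + ennreal (sqrt (ln r)) * L2 f'"
    using assms(1-3) by (intro norm_le_norm_add_sqrt_ln_L2) (auto intro: continuous_on_subset)
  then have "ennreal (norm (f r)) \<le> ennreal (6 + sqrt (ln r)) * H"
    by (rule ennreal_le_add_mult_bound[OF _ at_1 \<open>L2 f' \<le> H\<close>]) (use assms(1) in simp_all)
  also have "\<dots> \<le> ennreal (7 * jb (ln r)) * H"
    using sqrt_le_jb[of "ln r"] jb_ge_1[of "ln r"] assms(1)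
    by (intro mult_right_mono ennreal_leI) auto
  finally show ?thesis .
qed

lemma norm_le_power_growth_bound:
  fixes f :: "real \<Rightarrow> 'a::banach" and w :: "real \<Rightarrow> real"
  assumes "1 \<le> r" "\<And>x. 1 \<le> x \<Longrightarrow> (f has_vector_derivative f' x) (at x)" "continuous_on {1..} f'"
    and "f' \<in> borel_measurable borel" "\<And>x. 1 \<le> x \<Longrightarrow> norm (f' x) \<le> x^k * w x"
    and "ennreal (norm (f 1)) \<le> ennreal a * H" "0 \<le> a" "L2 (\<lambda>x. w x / (x * jb (ln x))) \<le> H"
  shows "ennreal (norm (f r)) \<le> ennreal ((a + 1) * jb (ln r) * r^(k+1)) * H"
proof -
  have "ennreal (norm (f r)) \<le> ennreal (norm (f 1)) + ennreal (r^(k+1) * jb (ln r)) * L2 (\<lambda>x. w x / (x * jb (ln x)))"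
    using assms(1-5) by (intro norm_le_norm_add_log_weight_L2) (auto intro: continuous_on_subset)
  then have "ennreal (norm (f r)) \<le> ennreal (a + r^(k+1) * jb (ln r)) * H"
    using assms(1) jb_pos[of "ln r"] by (intro ennreal_le_add_mult_bound[OF _ assms(6,8) _ assms(7)]) simp_all
  also have "\<dots> \<le> ennreal ((a + 1) * jb (ln r) * r^(k+1)) * H"
  proof (intro mult_right_mono ennreal_leI)
    have "1 \<le> r^(k+1) * jb (ln r)"
      using mult_mono[OF one_le_power[OF assms(1), of "k+1"] jb_ge_1[of "ln r"]] assms(1) by simp
    then have "a \<le> a * (r^(k+1) * jb (ln r))"
      using mult_left_mono[OF _ assms(7)] by fastforce
    then show "a + r^(k+1) * jb (ln r) \<le> (a + 1) * jb (ln r) * r^(k+1)"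
      by (simp add: algebra_simps)
  qed simp
  finally show ?thesis .
qed

lemma wk_nonneg: "0 \<le> wk k f r"
proof -
  have "norm (drk k f r) / r^0 \<in> (\<lambda>l. norm (drk (k - l) f r) / r ^ l) ` {0..k}"
    by (rule image_eqI[where x=0]) auto
  then show ?thesis unfolding wk_def by (intro order_trans[OF _ Max_ge]) auto
qed

lemma wk1_eq: "wk 1 f r = max (norm (dr f r)) (norm (f r) / r)"
  by (simp add: wk_def atLeast0AtMost atMost_Suc max.commute)

lemma wk2_eq: "wk 2 f r = max (norm (drk 2 f r)) (max (norm (dr f r) / r) (norm (f r) / r^2))"
  by (simp add: wk_def atLeast0AtMost atMost_Suc numeral_2_eq_2 max_def)

lemma norm_dr_le_wk1: "norm (dr f r) \<le> wk 1 f r"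
  unfolding wk1_eq by simp

lemma norm_le_mult_wk1: "0 < r \<Longrightarrow> norm (f r) \<le> r * wk 1 f r"
  unfolding wk1_eq by (simp add: max_def field_simps)

lemma drk_2: "drk 2 f = dr (dr f)"
  by (simp add: numeral_2_eq_2)

lemma norm_le_L2_wk1_near_0:
  assumes "0 < a" "a \<le> 1" "\<And>x. x \<in> {a..2} \<Longrightarrow> (f has_vector_derivative dr f x) (at x)"
    and "continuous_on {a..2} (dr f)" "f \<in> borel_measurable borel" "dr f \<in> borel_measurable borel"
  shows "ennreal (norm (f a)) \<le> ennreal 13 * L2 (\<lambda>x. wk 1 f x / (x * jb (ln x)))"
proof -
  let ?G = "\<lambda>x. wk 1 f x / (x * jb (ln x))"
  have "(ennreal (norm (f a)))^2 \<le> ennreal (2*56) * (L2 ?G)^2 + ennreal (56 * 4^0) * (L2 ?G)^2"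
  proof (rule sq_norm_le_log_weight_average)
    show "norm (dr f x) \<le> x^0 * wk 1 f x" for x
      using norm_dr_le_wk1[of f x] by simp
    show "(norm (f x))^2 \<le> 56 * (2*pi*x*(norm (?G x))^2)" if "x \<in> {1..2}" for x
      using that sq_le_log_weight_density[of x "norm (f x)" 1 "wk 1 f x"] norm_le_mult_wk1[of x f] by simp
  qed (use assms in simp_all)
  also have "\<dots> = ennreal 168 * (L2 ?G)^2"
    by (simp add: distrib_right[symmetric])
  finally show ?thesis
    by (rule ennreal_le_mult_of_sq_le) simp_all
qed

section \<open>A Hardy inequality\<close>

lemma nn_integral_Hardy_of_pointwise:
  fixes g Q :: "real \<Rightarrow> real"
  assumes [measurable]: "g \<in> borel_measurable borel"
    and "\<And>s. 0 \<le> Q s"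
    and "\<And>s. 0 < s \<Longrightarrow> (ennreal (Q s))^2 \<le> ennreal s * (\<integral>\<^sup>+t. ennreal (t^2 * (g t)^2) * indicator {0..s} t \<partial>lborel)"
  shows "(\<integral>\<^sup>+s. ennreal ((Q s)^2 / s^3) * indicator {0<..} s \<partial>lborel)
    \<le> (\<integral>\<^sup>+t. ennreal (t * (g t)^2) * indicator {0<..} t \<partial>lborel)"
proof -
  \<comment> \<open>Swap the order of integration; the integral of 1/s^2 over s \<ge> t is 1/t.\<close>
  define F where "F s t = ennreal (1 / s^2) * indicator {0<..} s *
      (ennreal (t^2 * (g t)^2) * (if 0 \<le> t \<and> t \<le> s then 1 else 0))" for s t :: real
  have [measurable]: "case_prod F \<in> borel_measurable (lborel \<Otimes>\<^sub>M lborel)"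
    unfolding F_def by measurable
  have "(\<integral>\<^sup>+s. ennreal ((Q s)^2 / s^3) * indicator {0<..} s \<partial>lborel) \<le> (\<integral>\<^sup>+s. (\<integral>\<^sup>+t. F s t \<partial>lborel) \<partial>lborel)"
  proof (intro nn_integral_mono)
    fix s :: real
    show "ennreal ((Q s)^2 / s^3) * indicator {0<..} s \<le> (\<integral>\<^sup>+t. F s t \<partial>lborel)"
    proof (cases "0 < s")
      case True
      let ?I = "\<integral>\<^sup>+t. ennreal (t^2 * (g t)^2) * indicator {0..s} t \<partial>lborel"
      have "ennreal ((Q s)^2 / s^3) = ennreal (1 / s^3) * (ennreal (Q s))^2"
        using True assms(2)[of s] by (simp add: ennreal_power ennreal_mult[symmetric])
      also have "\<dots> \<le> ennreal (1 / s^3) * (ennreal s * ?I)"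
        using assms(3)[OF True] by (rule mult_left_mono) simp
      also have "\<dots> = ennreal (1 / s^2) * ?I"
        using True by (simp add: mult.assoc[symmetric] ennreal_mult[symmetric] power3_eq_cube power2_eq_square)
      also have "\<dots> = (\<integral>\<^sup>+t. F s t \<partial>lborel)"
        unfolding F_def using True
        by (subst nn_integral_cmult[symmetric]) (auto intro!: nn_integral_cong simp: indicator_def)
      finally show ?thesis using True by simp
    qed simp
  qed
  also have "\<dots> = (\<integral>\<^sup>+t. (\<integral>\<^sup>+s. F s t \<partial>lborel) \<partial>lborel)"
    by (rule lborel_pair.Fubini'[symmetric]) measurable
  also have "\<dots> \<le> (\<integral>\<^sup>+t. ennreal (t * (g t)^2) * indicator {0<..} t \<partial>lborel)"
  proof (intro nn_integral_mono)
    fix t :: real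
    show "(\<integral>\<^sup>+s. F s t \<partial>lborel) \<le> ennreal (t * (g t)^2) * indicator {0<..} t"
    proof (cases "0 < t")
      case True
      have "(\<integral>\<^sup>+s. F s t \<partial>lborel) = ennreal (t^2 * (g t)^2) * (\<integral>\<^sup>+s. ennreal (1 / s^2) * indicator {t..} s \<partial>lborel)"
        unfolding F_def using True
        by (subst nn_integral_cmult[symmetric]) (auto intro!: nn_integral_cong simp: indicator_def mult_ac)
      also have "\<dots> = ennreal (t * (g t)^2)"
        using True by (simp add: nn_integral_inverse_sq_tail) (simp add: ennreal_mult[symmetric] power2_eq_square)
      finally show ?thesis using True by simp
    next
      case False
      then have "F s t = 0" for s
        unfolding F_def by (cases "t = 0") auto
      then show ?thesis by simp
    qed
  qed
  finally show ?thesis .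
qed

lemma Hardy_inequality:
  fixes q g :: "real \<Rightarrow> 'a::banach"
  assumes "q 0 = 0" "\<And>t. (q has_vector_derivative t *\<^sub>R g t) (at t)" "continuous_on UNIV g"
    and [measurable]: "g \<in> borel_measurable borel"
  shows "(\<integral>\<^sup>+s. ennreal ((norm (q s))^2 / s^3) * indicator {0<..} s \<partial>lborel)
    \<le> (\<integral>\<^sup>+t. ennreal (t * (norm (g t))^2) * indicator {0<..} t \<partial>lborel)"
proof (rule nn_integral_Hardy_of_pointwise)
  fix s :: real assume "0 < s"
  have "ennreal (norm (q s)) \<le> (\<integral>\<^sup>+t. ennreal (norm (t *\<^sub>R g t)) * indicator {0..s} t \<partial>lborel)"
    using norm_diff_le_nn_integral_deriv[of 0 s q "\<lambda>t. t *\<^sub>R g t"] assms(1,2) \<open>0 < s\<close>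
    by (simp add: continuous_on_scaleR continuous_on_id continuous_on_subset[OF assms(3)])
  then have "(ennreal (norm (q s)))^2 \<le> (\<integral>\<^sup>+t. ennreal (\<bar>t\<bar> * norm (g t)) * indicator {0..s} t \<partial>lborel)^2"
    by (intro power_mono) simp_all
  also have "\<dots> \<le> (\<integral>\<^sup>+t. ennreal 1 * indicator {0..s} t \<partial>lborel) *
      (\<integral>\<^sup>+t. ennreal ((\<bar>t\<bar> * norm (g t))^2 / 1) * indicator {0..s} t \<partial>lborel)"
    by (rule nn_integral_Cauchy_Schwarz_weighted) auto
  also have "\<dots> = ennreal s * (\<integral>\<^sup>+t. ennreal (t^2 * (norm (g t))^2) * indicator {0..s} t \<partial>lborel)"
    using \<open>0 < s\<close> by (simp add: nn_integral_cmult_indicator power_mult_distrib)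
  finally show "(ennreal (norm (q s)))^2 \<le> ennreal s * (\<integral>\<^sup>+t. ennreal (t^2 * (norm (g t))^2) * indicator {0..s} t \<partial>lborel)" .
qed auto

lemma Hardy_inequality_L2:
  fixes q g :: "real \<Rightarrow> 'a::banach"
  assumes "q 0 = 0" "\<And>t. (q has_vector_derivative t *\<^sub>R g t) (at t)" "continuous_on UNIV g"
    and [measurable]: "g \<in> borel_measurable borel"
  shows "ennreal (2/pi) * (\<integral>\<^sup>+s. ennreal ((norm (q s))^2 / s^3) * indicator {0<..} s \<partial>lborel) \<le> (L2 g)^2"
proof -
  have "ennreal (2/pi) * (\<integral>\<^sup>+s. ennreal ((norm (q s))^2 / s^3) * indicator {0<..} s \<partial>lborel)
      \<le> ennreal (2/pi) * (\<integral>\<^sup>+t. ennreal (t * (norm (g t))^2) * indicator {0<..} t \<partial>lborel)"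
    using assms by (intro mult_left_mono Hardy_inequality) simp_all
  also have "\<dots> = (\<integral>\<^sup>+t. ennreal (2/pi) * (ennreal (t * (norm (g t))^2) * indicator {0<..} t) \<partial>lborel)"
    by (rule nn_integral_cmult[symmetric]) measurable
  also have "\<dots> \<le> (L2 g)^2"
    unfolding L2_sq
  proof (intro nn_integral_mono)
    fix t :: real
    show "ennreal (2/pi) * (ennreal (t * (norm (g t))^2) * indicator {0<..} t)
        \<le> ennreal (2*pi*t*(norm (g t))^2) * indicator {0<..} t"
    proof (cases "0 < t")
      case True
      have "2/pi \<le> 2*pi" using pi_gt3 by (smt (verit) divide_le_eq_1)
      then have "2/pi * (t * (norm (g t))^2) \<le> 2*pi * (t * (norm (g t))^2)"
        using True by (intro mult_right_mono) simp_all
      then show ?thesis using True by (simp add: ennreal_mult[symmetric] mult.assoc ennreal_leI)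
    qed simp
  qed
  finally show ?thesis .
qed

lemma has_vector_derivative_norm_sq_div_sq:
  fixes f :: "real \<Rightarrow> 'a::real_inner"
  assumes "(f has_vector_derivative f') (at s)" "s \<noteq> 0"
  shows "((\<lambda>s. (norm (f s))^2 / s^2) has_vector_derivative 2 * inner (f s) (s *\<^sub>R f' - f s) / s^3) (at s)"
proof -
  have "((\<lambda>s. (norm (f s))^2 / s^2) has_real_derivative
      ((2 * inner (f s) f') * s^2 - (norm (f s))^2 * (2 * s)) / (s^2 * s^2)) (at s)"
    using has_vector_derivative_norm_sq[OF assms(1)] assms(2)
    by (intro DERIV_divide) (auto simp: has_real_derivative_iff_has_vector_derivative[symmetric] intro!: derivative_eq_intros)
  moreover have "((2 * inner (f s) f') * s^2 - (norm (f s))^2 * (2 * s)) / (s^2 * s^2)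
      = 2 * inner (f s) (s *\<^sub>R f' - f s) / s^3"
    using assms(2) by (simp add: inner_diff_right dot_square_norm field_simps power2_eq_square power3_eq_cube)
  ultimately show ?thesis by (simp add: has_real_derivative_iff_has_vector_derivative)
qed

lemma sq_norm_div_sq_le_nn_integral_tail:
  fixes f :: "real \<Rightarrow> 'a::real_inner"
  assumes deriv: "\<And>x. (f has_vector_derivative f' x) (at x)" and "continuous_on UNIV f"
    and "continuous_on UNIV f'" "(f \<longlongrightarrow> 0) at_top" "0 < r"
  shows "ennreal ((norm (f r))^2 / r^2)
    \<le> (\<integral>\<^sup>+s. ennreal (norm (2 * inner (f s) (s *\<^sub>R f' s - f s) / s^3)) * indicator {r..} s \<partial>lborel)"
proof -
  have "((\<lambda>s. (norm (f s))^2) \<longlongrightarrow> 0) at_top"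
    using tendsto_power[OF tendsto_norm[OF assms(4)], of 2] by simp
  then have "((\<lambda>s. (norm (f s))^2 / s^2) \<longlongrightarrow> 0) at_top"
    by (rule tendsto_divide_0) (auto intro!: filterlim_at_top_imp_at_infinity filterlim_pow_at_top filterlim_ident)
  then have "ennreal (norm ((norm (f r))^2 / r^2))
      \<le> (\<integral>\<^sup>+s. ennreal (norm (2 * inner (f s) (s *\<^sub>R f' s - f s) / s^3)) * indicator {r..} s \<partial>lborel)"
    using \<open>0 < r\<close> deriv
    by (intro norm_le_nn_integral_deriv_tail has_vector_derivative_norm_sq_div_sq continuous_intros
          continuous_on_subset[OF assms(2)] continuous_on_subset[OF assms(3)]) auto
  then show ?thesis by simp
qed

lemma sq_norm_le_nn_integral_tail_div:
  fixes f :: "real \<Rightarrow> 'a::real_inner"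
  assumes deriv: "\<And>x. (f has_vector_derivative f' x) (at x)" and "continuous_on UNIV f'"
    and "(f \<longlongrightarrow> 0) at_top" "0 < r"
  shows "ennreal ((norm (f r))^2)
    \<le> (\<integral>\<^sup>+s. ennreal (2 * norm (f s) * norm (s *\<^sub>R f' s - f s) / s) * indicator {r..} s \<partial>lborel)"
proof -
  have "continuous_on UNIV f"
    using deriv by (intro continuous_at_imp_continuous_on) (blast intro: has_vector_derivative_continuous)
  then have "ennreal (r^2) * ennreal ((norm (f r))^2 / r^2) \<le> ennreal (r^2) *
      (\<integral>\<^sup>+s. ennreal (norm (2 * inner (f s) (s *\<^sub>R f' s - f s) / s^3)) * indicator {r..} s \<partial>lborel)"
    using assms by (intro mult_left_mono sq_norm_div_sq_le_nn_integral_tail) simp_all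
  also have "\<dots> = (\<integral>\<^sup>+s. ennreal (r^2) * (ennreal (norm (2 * inner (f s) (s *\<^sub>R f' s - f s) / s^3)) * indicator {r..} s) \<partial>lborel)"
  proof (intro nn_integral_cmult[symmetric])
    have "continuous_on UNIV (\<lambda>s. inner (f s) (s *\<^sub>R f' s - f s))"
      by (intro continuous_intros \<open>continuous_on UNIV f\<close> assms(2))
    then have [measurable]: "(\<lambda>s. inner (f s) (s *\<^sub>R f' s - f s)) \<in> borel_measurable borel"
      by (rule borel_measurable_continuous_onI)
    show "(\<lambda>s. ennreal (norm (2 * inner (f s) (s *\<^sub>R f' s - f s) / s^3)) * indicator {r..} s) \<in> borel_measurable lborel"
      by measurable
  qed
  also have "\<dots> \<le> (\<integral>\<^sup>+s. ennreal (2 * norm (f s) * norm (s *\<^sub>R f' s - f s) / s) * indicator {r..} s \<partial>lborel)"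
  proof (intro nn_integral_mono)
    fix s
    show "ennreal (r^2) * (ennreal (norm (2 * inner (f s) (s *\<^sub>R f' s - f s) / s^3)) * indicator {r..} s)
        \<le> ennreal (2 * norm (f s) * norm (s *\<^sub>R f' s - f s) / s) * indicator {r..} s"
    proof (cases "r \<le> s")
      case True
      let ?P = "2 * norm (f s) * norm (s *\<^sub>R f' s - f s)"
      have "r^2 * norm (2 * inner (f s) (s *\<^sub>R f' s - f s) / s^3) \<le> s^2 * (?P / s^3)"
        using True \<open>0 < r\<close> abs_two_inner_le
        by (auto simp: norm_divide intro!: mult_mono power_mono divide_right_mono)
      also have "\<dots> = ?P / s"
        using True \<open>0 < r\<close> by (simp add: power2_eq_square power3_eq_cube)
      finally show ?thesis
        using True \<open>0 < r\<close> by (simp add: ennreal_mult[symmetric] ennreal_leI)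
    qed simp
  qed
  finally show ?thesis using \<open>0 < r\<close> by (simp add: ennreal_mult[symmetric])
qed

lemma nn_integral_Cauchy_Schwarz_radial:
  fixes a b :: "real \<Rightarrow> real"
  assumes [measurable]: "a \<in> borel_measurable borel" "b \<in> borel_measurable borel"
    and "\<And>s. 0 \<le> a s" "\<And>s. 0 \<le> b s" "0 < r"
  shows "(\<integral>\<^sup>+s. ennreal (2 * a s * b s / s) * indicator {r..} s \<partial>lborel)^2
    \<le> (\<integral>\<^sup>+s. ennreal (2*pi* s*(a s)^2) * indicator {0<..} s \<partial>lborel) *
       (ennreal (2/pi) * (\<integral>\<^sup>+s. ennreal ((b s)^2 / s^3) * indicator {0<..} s \<partial>lborel))"
proof -
  define F where "F s = ennreal (sqrt (2*pi* s) * a s) * indicator {0<..} s" for s :: real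
  define G where "G s = ennreal (2 * b s / (sqrt (2*pi* s) * s)) * indicator {0<..} s" for s :: real
  have [measurable]: "F \<in> borel_measurable lborel" "G \<in> borel_measurable lborel"
    unfolding F_def G_def by measurable
  have "(\<integral>\<^sup>+s. ennreal (2 * a s * b s / s) * indicator {r..} s \<partial>lborel) \<le> (\<integral>\<^sup>+s. F s * G s \<partial>lborel)"
  proof (intro nn_integral_mono)
    fix s
    show "ennreal (2 * a s * b s / s) * indicator {r..} s \<le> F s * G s"
    proof (cases "r \<le> s")
      case True
      then have "F s * G s = ennreal (2 * a s * b s / s)"
        using \<open>0 < r\<close> assms(3,4)[of s] unfolding F_def G_def
        by (simp add: ennreal_mult[symmetric] field_simps real_sqrt_mult)
      then show ?thesis using True by simp
    qed simp
  qed
  then have "(\<integral>\<^sup>+s. ennreal (2 * a s * b s / s) * indicator {r..} s \<partial>lborel)^2 \<le> (\<integral>\<^sup>+s. F s * G s \<partial>lborel)^2"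
    by (intro power_mono) simp_all
  also have "\<dots> \<le> (\<integral>\<^sup>+s. F s ^ 2 \<partial>lborel) * (\<integral>\<^sup>+s. G s ^ 2 \<partial>lborel)"
    by (rule Cauchy_Schwarz_nn_integral) measurable
  also have "(\<integral>\<^sup>+s. F s ^ 2 \<partial>lborel) = (\<integral>\<^sup>+s. ennreal (2*pi* s*(a s)^2) * indicator {0<..} s \<partial>lborel)"
    unfolding F_def using assms(3)
    by (intro nn_integral_cong) (auto simp: indicator_def ennreal_power power_mult_distrib)
  also have "(\<integral>\<^sup>+s. G s ^ 2 \<partial>lborel) = (\<integral>\<^sup>+s. ennreal (2/pi) * (ennreal ((b s)^2 / s^3) * indicator {0<..} s) \<partial>lborel)"
  proof (intro nn_integral_cong)
    fix s :: real
    show "G s ^ 2 = ennreal (2/pi) * (ennreal ((b s)^2 / s^3) * indicator {0<..} s)"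
    proof (cases "0 < s")
      case True
      have "(2 * b s / (sqrt (2*pi* s) * s))^2 = 2/pi * ((b s)^2 / s^3)"
        using True by (simp add: power_divide power_mult_distrib field_simps power2_eq_square power3_eq_cube)
      then show ?thesis using True assms(4)[of s] unfolding G_def by (simp add: ennreal_power ennreal_mult[symmetric])
    qed (simp add: G_def)
  qed
  also have "\<dots> = ennreal (2/pi) * (\<integral>\<^sup>+s. ennreal ((b s)^2 / s^3) * indicator {0<..} s \<partial>lborel)"
    by (rule nn_integral_cmult) measurable
  finally show ?thesis .
qed

section \<open>Smooth radial profiles\<close>

lemma has_vector_derivative_profile:
  assumes "u differentiable (at (complex_of_real x))"
  shows "(profile u has_vector_derivative profile (pdir 1 u) x) (at x)"
proof -
  let ?D = "frechet_derivative u (at (complex_of_real x))"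
  have D: "(u has_derivative ?D) (at (complex_of_real x))"
    using assms frechet_derivative_works by blast
  have "(complex_of_real has_derivative complex_of_real) (at x)"
    by (rule bounded_linear_imp_has_derivative) (rule bounded_linear_of_real)
  from has_derivative_compose[OF this D]
  have "((\<lambda>r. u (complex_of_real r)) has_derivative (\<lambda>h. ?D (complex_of_real h))) (at x)" .
  moreover have "?D (complex_of_real h) = h *\<^sub>R ?D 1" for h
    using linear_scale[OF has_derivative_linear[OF D], of h 1] by (simp add: scaleR_conv_of_real)
  ultimately show ?thesis
    by (simp add: has_vector_derivative_def profile_def[abs_def] pdir_def)
qed

lemma schwartz_differentiable_iter_pd:
  "schwartz u \<Longrightarrow> set ds \<subseteq> {1, \<i>} \<Longrightarrow> iter_pd ds u differentiable (at x)"
  unfolding schwartz_def by blast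

lemma drk_profile:
  assumes "schwartz u"
  shows "drk k (profile u) = profile (iter_pd (replicate k 1) u)"
proof (induction k)
  case (Suc k)
  have "dr (profile (iter_pd (replicate k 1) u)) x = profile (iter_pd (replicate (Suc k) 1) u) x" for x
  proof -
    have "iter_pd (replicate k 1) u differentiable (at (complex_of_real x))"
      using assms by (intro schwartz_differentiable_iter_pd) auto
    from has_vector_derivative_profile[OF this] show ?thesis
      unfolding dr_def by (simp add: vector_derivative_at)
  qed
  with Suc show ?case by auto
qed simp

lemma tendsto_profile_at_top:
  assumes "schwartz u"
  shows "(profile u \<longlongrightarrow> 0) at_top"
proof -
  obtain B where B: "\<And>x. norm x ^ 1 * norm (u x) \<le> B"
    using assms unfolding schwartz_def by (metis empty_subsetI iter_pd.simps(1) set_empty)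
  have "\<forall>\<^sub>F r in at_top. norm (profile u r) \<le> B / r"
    using eventually_gt_at_top[of 0]
  proof eventually_elim
    case (elim r)
    then show ?case using B[of "complex_of_real r"] by (simp add: profile_def field_simps)
  qed
  moreover have "((\<lambda>r. B / r) \<longlongrightarrow> 0) at_top"
    by (intro tendsto_divide_0[OF tendsto_const] filterlim_at_top_imp_at_infinity filterlim_ident)
  ultimately show ?thesis by (rule Lim_null_comparison)
qed

lemma equivariant_at_0:
  assumes "equivariant m u" "m \<noteq> 0"
  shows "u 0 = 0"
proof -
  have "cis (of_int m * (pi / of_int m)) = -1" using assms(2) by simp
  moreover have "u (cis (pi / of_int m) * 0) = cis (of_int m * (pi / of_int m)) * u 0"
    using assms(1) unfolding equivariant_def by blast
  ultimately show ?thesis by simp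
qed

(* Profiles are functions on the whole real line: only their smoothness there and
   their decay at +infinity enter the estimates. *)
locale smooth_profile =
  fixes v :: "real \<Rightarrow> complex"
  assumes has_vector_derivative_drk: "\<And>k x. (drk k v has_vector_derivative drk (Suc k) v x) (at x)"
    and tendsto_at_top: "(v \<longlongrightarrow> 0) at_top"

lemma schwartz_imp_smooth_profile:
  assumes "schwartz u"
  shows "smooth_profile (profile u)"
proof
  fix k x
  have "iter_pd (replicate k 1) u differentiable (at (complex_of_real x))"
    using assms by (intro schwartz_differentiable_iter_pd) auto
  from has_vector_derivative_profile[OF this]
  show "(drk k (profile u) has_vector_derivative drk (Suc k) (profile u) x) (at x)"
    unfolding drk_profile[OF assms] by simp
qed (rule tendsto_profile_at_top[OF assms])

context smooth_profile
begin

lemma continuous_on_drk: "continuous_on A (drk k v)"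
  by (rule continuous_at_imp_continuous_on) (use has_vector_derivative_drk has_vector_derivative_continuous in blast)

lemma borel_measurable_drk [measurable]: "drk k v \<in> borel_measurable borel"
  by (rule borel_measurable_continuous_onI) (rule continuous_on_drk)

lemma borel_measurable_v [measurable]: "v \<in> borel_measurable borel"
  and borel_measurable_dr [measurable]: "dr v \<in> borel_measurable borel"
  using borel_measurable_drk[of 0] borel_measurable_drk[of 1] by simp_all

lemma continuous_on_dr: "continuous_on A (dr v)"
  using continuous_on_drk[of A 1] by simp

lemma has_vector_derivative_v: "(v has_vector_derivative dr v x) (at x)"
  using has_vector_derivative_drk[of 0] by simp

lemma has_vector_derivative_dr: "(dr v has_vector_derivative drk 2 v x) (at x)"
  using has_vector_derivative_drk[of 1] by (simp add: drk_2)

section \<open>Bounds by the adapted norms\<close>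

lemma norm_le_H10_near_infinity:
  assumes "1 \<le> r"
  shows "ennreal (norm (v r)) \<le> H10 v"
proof -
  let ?g = "\<lambda>x. v x / complex_of_real (x * jb (logm x))"
  have "ennreal ((norm (v r))^2) \<le> (\<integral>\<^sup>+x. ennreal (2 * norm (v x) * norm (dr v x)) * indicator {r..} x \<partial>lborel)"
    using has_vector_derivative_v continuous_on_dr tendsto_at_top
    by (intro sq_norm_le_nn_integral_tail) simp_all
  also have "\<dots> \<le> (L2 ?g)^2 + (L2 (dr v))^2"
  proof (rule nn_integral_two_norm_mult_le_L2_sq)
    show "{r..} \<subseteq> {0<..}" using assms by auto
    show "norm (v x) \<le> x * norm (?g x)" if "x \<in> {r..}" for x
      using that assms by (simp add: logm_def jb_def norm_divide)
  qed measurable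
  finally have "(ennreal (norm (v r)))^2 \<le> ennreal 1 * (L2 (dr v))^2 + ennreal 1 * (L2 ?g)^2"
    by (simp add: ennreal_power add.commute)
  then have "ennreal (norm (v r)) \<le> ennreal 1 * (L2 (dr v) + L2 ?g)"
    by (rule ennreal_le_mult_add_of_sq_le) simp_all
  then show ?thesis by (simp add: H10_def)
qed

lemma norm_le_H12_near_0:
  assumes "v 0 = 0" "0 < r" "r \<le> 1"
  shows "ennreal (norm (v r)) \<le> H12 v"
proof -
  let ?g = "\<lambda>x. v x / complex_of_real (x * jb (logp x))"
  have "(ennreal (norm (v r)))^2 = ennreal \<bar>(norm (v r))^2 - (norm (v 0))^2\<bar>"
    using assms(1) by (simp add: ennreal_power)
  also have "\<dots> \<le> (\<integral>\<^sup>+x. ennreal (2 * norm (v x) * norm (dr v x)) * indicator {0..r} x \<partial>lborel)"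
    using assms(2) has_vector_derivative_v continuous_on_dr
    by (intro sq_norm_diff_le_nn_integral) simp_all
  also have "\<dots> = (\<integral>\<^sup>+x. ennreal (2 * norm (v x) * norm (dr v x)) * indicator {0<..r} x \<partial>lborel)"
    using assms(1) by (intro nn_integral_cong) (auto simp: indicator_def)
  also have "\<dots> \<le> (L2 ?g)^2 + (L2 (dr v))^2"
  proof (rule nn_integral_two_norm_mult_le_L2_sq)
    show "{0<..r} \<subseteq> {0<..}" by auto
    show "norm (v x) \<le> x * norm (?g x)" if "x \<in> {0<..r}" for x
      using that assms(3) by (simp add: logp_def jb_def norm_divide)
  qed measurable
  finally have "(ennreal (norm (v r)))^2 \<le> ennreal 1 * (L2 (dr v))^2 + ennreal 1 * (L2 ?g)^2"
    by (simp add: add.commute)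
  then have "ennreal (norm (v r)) \<le> ennreal 1 * (L2 (dr v) + L2 ?g)"
    by (rule ennreal_le_mult_add_of_sq_le) simp_all
  then show ?thesis by (simp add: H12_def)
qed

lemma norm_div_jb_le_H12_near_infinity:
  assumes "v 0 = 0" "1 \<le> r"
  shows "ennreal (norm (v r) / jb (logp r)) \<le> ennreal 2 * H12 v"
proof (rule ennreal_divide_le_of_le_mult)
  have "ennreal (norm (v r)) \<le> ennreal (norm (v 1)) + ennreal (sqrt (ln r)) * L2 (dr v)"
    using assms(2) has_vector_derivative_v continuous_on_dr
    by (intro norm_le_norm_add_sqrt_ln_L2) simp_all
  then have "ennreal (norm (v r)) \<le> ennreal (1 + sqrt (ln r)) * H12 v"
    by (rule ennreal_le_add_mult_bound)
       (use norm_le_H12_near_0[OF assms(1), of 1] assms(2) in \<open>simp_all add: H12_def\<close>)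
  also have "\<dots> \<le> ennreal (2 * jb (logp r)) * H12 v"
    using sqrt_le_jb[of "ln r"] jb_ge_1[of "ln r"] assms(2)
    by (intro mult_right_mono ennreal_leI) (simp_all add: logp_def)
  finally show "ennreal (norm (v r)) \<le> ennreal (2 * jb (logp r)) * H12 v" .
qed (simp_all add: jb_pos)

lemma norm_le_H21_near_0:
  assumes "0 < r" "r \<le> 1"
  shows "ennreal (norm (v r)) \<le> ennreal 13 * H21 v"
proof -
  have "ennreal (norm (v r)) \<le> ennreal 13 * L2 (\<lambda>x. wk 1 v x / (x * jb (ln x)))"
    using assms has_vector_derivative_v continuous_on_dr by (intro norm_le_L2_wk1_near_0) simp_all
  also have "\<dots> \<le> ennreal 13 * H21 v"
    by (intro mult_left_mono) (simp_all add: H21_def)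
  finally show ?thesis .
qed

lemma norm_dr_le_H21_near_infinity:
  assumes "1 \<le> r"
  shows "ennreal (norm (dr v r)) \<le> ennreal (7 * jb (ln r)) * H21 v"
proof (rule norm_le_log_growth_bound[where w = "wk 1 v"])
  show "L2 (\<lambda>x. wk 1 v x / (x * jb (ln x))) + L2 (drk 2 v) \<le> H21 v"
    by (simp add: H21_def add.commute)
  show "norm (dr v x) \<le> wk 1 v x" for x
    by (rule norm_dr_le_wk1)
qed (use assms has_vector_derivative_dr continuous_on_drk borel_measurable_drk[of 2] in simp_all)

lemma norm_le_H21_near_infinity:
  assumes "1 \<le> r"
  shows "ennreal (norm (v r)) \<le> ennreal (14 * jb (ln r) * r) * H21 v"
proof -
  have "ennreal (norm (v r)) \<le> ennreal ((13 + 1) * jb (ln r) * r^(0+1)) * H21 v"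
  proof (rule norm_le_power_growth_bound[where w = "wk 1 v"])
    show "norm (dr v x) \<le> x^0 * wk 1 v x" for x
      using norm_dr_le_wk1[of v x] by simp
    show "L2 (\<lambda>x. wk 1 v x / (x * jb (ln x))) \<le> H21 v"
      by (simp add: H21_def)
  qed (use assms has_vector_derivative_v continuous_on_dr norm_le_H21_near_0[of 1] in simp_all)
  then show ?thesis by simp
qed

lemma wk1_div_jb_le_H21_near_infinity:
  assumes "1 \<le> r"
  shows "ennreal (wk 1 v r / jb (logp r)) \<le> ennreal 14 * H21 v"
proof (rule ennreal_divide_le_of_le_mult)
  have "ennreal (norm (v r) / r) \<le> ennreal (14 * jb (ln r)) * H21 v"
    using norm_le_H21_near_infinity[OF assms] assms jb_pos[of "ln r"]
    by (intro ennreal_divide_le_of_le_mult) simp_all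
  moreover have "ennreal (norm (dr v r)) \<le> ennreal (14 * jb (ln r)) * H21 v"
    using norm_dr_le_H21_near_infinity[OF assms]
    by (rule order_trans) (use jb_pos[of "ln r"] in \<open>intro mult_right_mono ennreal_leI; simp\<close>)
  ultimately show "ennreal (wk 1 v r) \<le> ennreal (14 * jb (logp r)) * H21 v"
    using assms unfolding wk1_eq by (simp add: logp_def max_def)
qed (simp_all add: jb_pos)

lemma norm_le_sqrt_L2_mult_H21:
  assumes "v 0 = 0" "0 < r"
  shows "ennreal (norm (v r)) \<le> ennsqrt (L2 v) * ennsqrt (H21 v)"
proof -
  define q where "q s = s *\<^sub>R dr v s - v s" for s
  have dq: "(q has_vector_derivative s *\<^sub>R drk 2 v s) (at s)" for s
  proof -
    have "(q has_vector_derivative (s *\<^sub>R drk 2 v s + 1 *\<^sub>R dr v s - dr v s)) (at s)"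
      unfolding q_def[abs_def]
      by (intro has_vector_derivative_diff has_vector_derivative_scaleR DERIV_ident
            has_vector_derivative_dr has_vector_derivative_v)
    then show ?thesis by simp
  qed
  have hardy: "ennreal (2/pi) * (\<integral>\<^sup>+s. ennreal ((norm (q s))^2 / s^3) * indicator {0<..} s \<partial>lborel)
      \<le> (L2 (drk 2 v))^2"
    using assms(1) dq continuous_on_drk[of _ 2] by (intro Hardy_inequality_L2) (simp_all add: q_def[of 0])
  have [measurable]: "q \<in> borel_measurable borel"
    unfolding q_def by measurable
  have "(ennreal (norm (v r)))^2 \<le> (\<integral>\<^sup>+s. ennreal (2 * norm (v s) * norm (q s) / s) * indicator {r..} s \<partial>lborel)"
    using sq_norm_le_nn_integral_tail_div[OF has_vector_derivative_v continuous_on_dr tendsto_at_top assms(2)]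
    unfolding q_def by (simp add: ennreal_power)
  then have "((ennreal (norm (v r)))^2)^2 \<le> (\<integral>\<^sup>+s. ennreal (2 * norm (v s) * norm (q s) / s) * indicator {r..} s \<partial>lborel)^2"
    by (rule power_mono) simp
  also have "\<dots> \<le> (L2 v)^2 * (ennreal (2/pi) * (\<integral>\<^sup>+s. ennreal ((norm (q s))^2 / s^3) * indicator {0<..} s \<partial>lborel))"
    unfolding L2_sq by (rule nn_integral_Cauchy_Schwarz_radial) (simp_all add: assms(2))
  also have "\<dots> \<le> (L2 v * L2 (drk 2 v))^2"
    unfolding power_mult_distrib using hardy by (rule mult_left_mono) simp
  finally have "(ennreal (norm (v r)))^2 \<le> L2 v * L2 (drk 2 v)"
    by (rule ennreal_le_of_power_le) simp
  also have "\<dots> = (ennsqrt (L2 v) * ennsqrt (L2 (drk 2 v)))^2"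
    by (simp add: power_mult_distrib ennsqrt_sq)
  finally have "ennreal (norm (v r)) \<le> ennsqrt (L2 v) * ennsqrt (L2 (drk 2 v))"
    by (rule ennreal_le_of_power_le) simp
  also have "\<dots> \<le> ennsqrt (L2 v) * ennsqrt (H21 v)"
    by (intro mult_left_mono ennsqrt_mono) (simp_all add: H21_def)
  finally show ?thesis .
qed

lemma L2_le_H30:
  shows "L2 (\<lambda>x. wk 1 (dr v) x / (x * jb (ln x))) + L2 (drk 3 v) \<le> H30 v"
    and "L2 (\<lambda>x. v x / complex_of_real (x * (jb x)^2 * jb (ln x))) + L2 (\<lambda>x. wk 1 (dr v) x / (x * jb (ln x))) \<le> H30 v"
    and "L2 (\<lambda>x. wk 1 (dr v) x / (x * jb (ln x))) \<le> H30 v"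
  unfolding H30_def by (simp_all add: add_ac add_increasing add_increasing2)

lemma norm_le_H30_near_0:
  assumes "0 < r" "r \<le> 1"
  shows "ennreal (norm (v r)) \<le> ennreal 16 * H30 v"
proof -
  let ?G = "\<lambda>x. wk 1 (dr v) x / (x * jb (ln x))"
  let ?K = "\<lambda>x. v x / complex_of_real (x * (jb x)^2 * jb (ln x))"
  have "(ennreal (norm (v r)))^2 \<le> ennreal (2*20) * (L2 ?K)^2 + ennreal (56 * 4^1) * (L2 ?G)^2"
  proof (rule sq_norm_le_log_weight_average)
    show "norm (dr v x) \<le> x^1 * wk 1 (dr v) x" if "x \<in> {r..2}" for x
      using that assms norm_le_mult_wk1[of x "dr v"] by simp
    show "(norm (v x))^2 \<le> 20 * (2*pi*x*(norm (?K x))^2)" if "x \<in> {1..2}" for x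
      using that by (intro sq_norm_le_H30_density) auto
  qed (use assms has_vector_derivative_v continuous_on_dr in simp_all)
  then have "ennreal (norm (v r)) \<le> ennreal 16 * (L2 ?K + L2 ?G)"
    by (rule ennreal_le_mult_add_of_sq_le) simp_all
  also have "\<dots> \<le> ennreal 16 * H30 v"
    using L2_le_H30(2) by (rule mult_left_mono) simp
  finally show ?thesis .
qed

lemma norm_drk2_le_H30_near_infinity:
  assumes "1 \<le> r"
  shows "ennreal (norm (drk 2 v r)) \<le> ennreal (7 * jb (ln r)) * H30 v"
proof (rule norm_le_log_growth_bound[where w = "wk 1 (dr v)"])
  show "norm (drk 2 v x) \<le> wk 1 (dr v) x" for x
    using norm_dr_le_wk1[of "dr v" x] by (simp add: drk_2)
qed (use assms has_vector_derivative_drk[of 2] continuous_on_drk borel_measurable_drk L2_le_H30(1) in simp_all)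

lemma norm_dr_le_H30_near_infinity:
  assumes "1 \<le> r"
  shows "ennreal (norm (dr v r)) \<le> ennreal (14 * jb (ln r) * r) * H30 v"
proof -
  have "ennreal (norm (dr v 1)) \<le> ennreal 13 * L2 (\<lambda>x. wk 1 (dr v) x / (x * jb (ln x)))"
    using has_vector_derivative_dr continuous_on_drk[of _ 2] borel_measurable_drk[of 2]
    by (intro norm_le_L2_wk1_near_0) (simp_all add: drk_2)
  also have "\<dots> \<le> ennreal 13 * H30 v"
    using L2_le_H30(3) by (rule mult_left_mono) simp
  finally have at_1: "ennreal (norm (dr v 1)) \<le> ennreal 13 * H30 v" .
  have "ennreal (norm (dr v r)) \<le> ennreal ((13 + 1) * jb (ln r) * r^(0+1)) * H30 v"
  proof (rule norm_le_power_growth_bound[where w = "wk 1 (dr v)"])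
    show "norm (drk 2 v x) \<le> x^0 * wk 1 (dr v) x" for x
      using norm_dr_le_wk1[of "dr v" x] by (simp add: drk_2)
  qed (use assms has_vector_derivative_dr continuous_on_drk borel_measurable_drk at_1 L2_le_H30(3) in simp_all)
  then show ?thesis by simp
qed

lemma norm_le_H30_near_infinity:
  assumes "1 \<le> r"
  shows "ennreal (norm (v r)) \<le> ennreal (17 * jb (ln r) * r^2) * H30 v"
proof -
  have "ennreal (norm (v r)) \<le> ennreal ((16 + 1) * jb (ln r) * r^(1+1)) * H30 v"
  proof (rule norm_le_power_growth_bound[where w = "wk 1 (dr v)"])
    show "norm (dr v x) \<le> x^1 * wk 1 (dr v) x" if "1 \<le> x" for x
      using that norm_le_mult_wk1[of x "dr v"] by simp
  qed (use assms has_vector_derivative_v continuous_on_dr norm_le_H30_near_0[of 1] L2_le_H30(3) in simp_all)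
  then show ?thesis by (simp add: power2_eq_square)
qed

lemma wk2_div_jb_le_H30_near_infinity:
  assumes "1 \<le> r"
  shows "ennreal (wk 2 v r / jb (logp r)) \<le> ennreal 17 * H30 v"
proof (rule ennreal_divide_le_of_le_mult)
  have j: "0 < jb (ln r)" by (rule jb_pos)
  have "ennreal (norm (v r) / r^2) \<le> ennreal (17 * jb (ln r)) * H30 v"
    using norm_le_H30_near_infinity[OF assms] assms j by (intro ennreal_divide_le_of_le_mult) simp_all
  moreover have "ennreal (norm (dr v r) / r) \<le> ennreal (17 * jb (ln r)) * H30 v"
  proof -
    have "ennreal (norm (dr v r) / r) \<le> ennreal (14 * jb (ln r)) * H30 v"
      using norm_dr_le_H30_near_infinity[OF assms] assms j by (intro ennreal_divide_le_of_le_mult) simp_all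
    then show ?thesis by (rule order_trans) (use j in \<open>intro mult_right_mono ennreal_leI; simp\<close>)
  qed
  moreover have "ennreal (norm (drk 2 v r)) \<le> ennreal (17 * jb (ln r)) * H30 v"
    using norm_drk2_le_H30_near_infinity[OF assms]
    by (rule order_trans) (use j in \<open>intro mult_right_mono ennreal_leI; simp\<close>)
  ultimately show "ennreal (wk 2 v r) \<le> ennreal (17 * jb (logp r)) * H30 v"
    using assms unfolding wk2_eq by (simp add: logp_def max_def)
qed (simp_all add: jb_pos)

end

lemma Linf_le_cmult:
  assumes "\<And>r. r \<in> S \<Longrightarrow> ennreal (f r) \<le> ennreal c * X" "\<And>r. r \<in> S \<Longrightarrow> 0 \<le> f r" "c \<le> C"
  shows "Linf S f \<le> ennreal C * X"
  unfolding Linf_def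
proof (rule SUP_least)
  fix r assume "r \<in> S"
  then have "ennreal \<bar>f r\<bar> \<le> ennreal c * X" using assms(1,2) by simp
  also have "\<dots> \<le> ennreal C * X" using assms(3) by (intro mult_right_mono ennreal_leI) simp_all
  finally show "ennreal \<bar>f r\<bar> \<le> ennreal C * X" .
qed

theorem lemmaA15:
  "\<exists>C>0.
    (\<forall>u. schwartz u \<and> equivariant 0 u \<longrightarrow>
       Linf {0<..1} (\<lambda>r. norm (profile u r)) \<le> ennreal C * H30 (profile u) \<and>
       Linf {1..} (\<lambda>r. norm (profile u r)) \<le> ennreal C * H10 (profile u) \<and>
       Linf {1..} (\<lambda>r. wk 2 (profile u) r / jb (logp r)) \<le> ennreal C * H30 (profile u)) \<and>
    (\<forall>u. schwartz u \<and> equivariant 1 u \<longrightarrow>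
       Linf {0<..1} (\<lambda>r. norm (profile u r)) \<le> ennreal C * H21 (profile u) \<and>
       Linf {1..} (\<lambda>r. norm (profile u r)) \<le>
         ennreal C * ennsqrt (L2 (profile u)) * ennsqrt (H21 (profile u)) \<and>
       Linf {1..} (\<lambda>r. wk 1 (profile u) r / jb (logp r)) \<le> ennreal C * H21 (profile u)) \<and>
    (\<forall>u. schwartz u \<and> equivariant 2 u \<longrightarrow>
       Linf {0<..1} (\<lambda>r. norm (profile u r)) \<le> ennreal C * H12 (profile u) \<and>
       Linf {1..} (\<lambda>r. norm (profile u r) / jb (logp r)) \<le> ennreal C * H12 (profile u))"
proof (intro exI[of _ 17] conjI allI impI; (elim conjE)?)
  fix u assume "schwartz u" "equivariant 0 u"
  interpret smooth_profile "profile u" using \<open>schwartz u\<close> by (rule schwartz_imp_smooth_profile)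
  show "Linf {0<..1} (\<lambda>r. norm (profile u r)) \<le> ennreal 17 * H30 (profile u)"
    by (rule Linf_le_cmult[where c = 16]) (use norm_le_H30_near_0 in auto)
  show "Linf {1..} (\<lambda>r. norm (profile u r)) \<le> ennreal 17 * H10 (profile u)"
    by (rule Linf_le_cmult[where c = 1]) (use norm_le_H10_near_infinity in auto)
  show "Linf {1..} (\<lambda>r. wk 2 (profile u) r / jb (logp r)) \<le> ennreal 17 * H30 (profile u)"
    by (rule Linf_le_cmult[where c = 17]) (use wk2_div_jb_le_H30_near_infinity divide_nonneg_pos[OF wk_nonneg jb_pos] in auto)
next
  fix u assume "schwartz u" "equivariant 1 u"
  interpret smooth_profile "profile u" using \<open>schwartz u\<close> by (rule schwartz_imp_smooth_profile)
  have "profile u 0 = 0" using equivariant_at_0[OF \<open>equivariant 1 u\<close>] by (simp add: profile_def)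
  show "Linf {0<..1} (\<lambda>r. norm (profile u r)) \<le> ennreal 17 * H21 (profile u)"
    by (rule Linf_le_cmult[where c = 13]) (use norm_le_H21_near_0 in auto)
  show "Linf {1..} (\<lambda>r. norm (profile u r)) \<le> ennreal 17 * ennsqrt (L2 (profile u)) * ennsqrt (H21 (profile u))"
    unfolding mult.assoc
    by (rule Linf_le_cmult[where c = 1]) (use norm_le_sqrt_L2_mult_H21[OF \<open>profile u 0 = 0\<close>] in auto)
  show "Linf {1..} (\<lambda>r. wk 1 (profile u) r / jb (logp r)) \<le> ennreal 17 * H21 (profile u)"
    by (rule Linf_le_cmult[where c = 14]) (use wk1_div_jb_le_H21_near_infinity divide_nonneg_pos[OF wk_nonneg jb_pos] in auto)
next
  fix u assume "schwartz u" "equivariant 2 u"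
  interpret smooth_profile "profile u" using \<open>schwartz u\<close> by (rule schwartz_imp_smooth_profile)
  have "profile u 0 = 0" using equivariant_at_0[OF \<open>equivariant 2 u\<close>] by (simp add: profile_def)
  show "Linf {0<..1} (\<lambda>r. norm (profile u r)) \<le> ennreal 17 * H12 (profile u)"
    by (rule Linf_le_cmult[where c = 1]) (use norm_le_H12_near_0[OF \<open>profile u 0 = 0\<close>] in auto)
  show "Linf {1..} (\<lambda>r. norm (profile u r) / jb (logp r)) \<le> ennreal 17 * H12 (profile u)"
    by (rule Linf_le_cmult[where c = 2])
       (use norm_div_jb_le_H12_near_infinity[OF \<open>profile u 0 = 0\<close>] divide_nonneg_pos[OF norm_ge_zero jb_pos] in auto)
qed simp

end
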